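(* Let $\lambda\ge 2$ be an integer. For every $f\in\mathcal{F}_{1,1}$ and every $\epsilon\in(0,1)$ there is a ReLU network (whose topology may depend on $f$) with all weights taken from $\{-1,\frac{1}{\lambda},\frac{2}{\lambda},\dots,\frac{\lambda-1}{\lambda}\}$ whose output $f''$ satisfies $\sup_{x\in[0,1]}|f''(x)-f(x)|\le\epsilon$, and such that: (i) the depth is $\mathcal{O}(\log(1/\epsilon))$; (ii) the number of weights is $\mathcal{O}(1/\epsilon)$; (iii) the number of bits needed to store the network is $\mathcal{O}(\log(\lambda)/\epsilon)$.
   Context: A ReLU network is a feedforward network with activation $\sigma(x)=\max(0,x)$, one input unit, hidden units and one output unit, where each unit connects only to units in the next layer; depth is the number of layers. Each weight is stored with $\log_2\lambda$ bits. $\mathcal{F}_{1,1}$ is the set of functions $f\in\mathscr{W}^{1,\infty}([0,1])$ with $\operatorname{ess\,sup}|f|\le1$ and $\operatorname{ess\,sup}|f'|\le 1$. All logarithms are base 2. *)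

theory Defs
  imports "HOL-Analysis.Analysis"
begin

text \<open>The class F_{1,1}: f in W^{1,inf}([0,1]) with ess sup |f| <= 1 and ess sup |f'| <= 1.
  In one dimension a function lies in W^{1,inf}([0,1]) iff (its representative) is an
  indefinite integral of an essentially bounded function g, which is the weak derivative.\<close>
definition F11 :: "(real \<Rightarrow> real) set" where
  "F11 = {f. (\<exists>g. g integrable_on {0..1} \<and>
                  (\<forall>x\<in>{0..1}. (g has_integral (f x - f 0)) {0..x}) \<and>
                  (AE x in lebesgue. x \<in> {0..1} \<longrightarrow> \<bar>g x\<bar> \<le> 1)) \<and>
             (AE x in lebesgue. x \<in> {0..1} \<longrightarrow> \<bar>f x\<bar> \<le> 1)}"

definition relu :: "real \<Rightarrow> real" where
  "relu x = max 0 x"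

text \<open>A layer is (number of input units, number of output units, weight matrix, bias vector).
  A zero entry means "no connection"; the number of weights counts the nonzero entries.\<close>
type_synonym layer = "nat \<times> nat \<times> (nat \<Rightarrow> nat \<Rightarrow> real) \<times> (nat \<Rightarrow> real)"

definition layer_din :: "layer \<Rightarrow> nat" where "layer_din L = fst L"
definition layer_dout :: "layer \<Rightarrow> nat" where "layer_dout L = fst (snd L)"
definition layer_W :: "layer \<Rightarrow> nat \<Rightarrow> nat \<Rightarrow> real" where "layer_W L = fst (snd (snd L))"
definition layer_b :: "layer \<Rightarrow> nat \<Rightarrow> real" where "layer_b L = snd (snd (snd L))"

definition affine :: "layer \<Rightarrow> (nat \<Rightarrow> real) \<Rightarrow> (nat \<Rightarrow> real)" where
  "affine L x = (\<lambda>j. if j < layer_dout L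
      then (\<Sum>i<layer_din L. layer_W L j i * x i) + layer_b L j else 0)"

fun net_eval :: "layer list \<Rightarrow> (nat \<Rightarrow> real) \<Rightarrow> (nat \<Rightarrow> real)" where
  "net_eval [] x = x"
| "net_eval [L] x = affine L x"
| "net_eval (L # M # Ls) x = net_eval (M # Ls) (\<lambda>j. relu (affine L x j))"

definition relu_net :: "layer list \<Rightarrow> bool" where
  "relu_net N \<longleftrightarrow> N \<noteq> [] \<and> layer_din (hd N) = 1 \<and> layer_dout (last N) = 1 \<and>
     (\<forall>k. Suc k < length N \<longrightarrow> layer_dout (N ! k) = layer_din (N ! Suc k))"

definition realize :: "layer list \<Rightarrow> real \<Rightarrow> real" where
  "realize N x = net_eval N (\<lambda>i. if i = 0 then x else 0) 0"

definition depth :: "layer list \<Rightarrow> nat" where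
  "depth N = length N"

definition layer_num_weights :: "layer \<Rightarrow> nat" where
  "layer_num_weights L =
     card {(j, i). j < layer_dout L \<and> i < layer_din L \<and> layer_W L j i \<noteq> 0}
   + card {j. j < layer_dout L \<and> layer_b L j \<noteq> 0}"

definition num_weights :: "layer list \<Rightarrow> nat" where
  "num_weights N = (\<Sum>L\<leftarrow>N. layer_num_weights L)"

definition weights_in :: "real set \<Rightarrow> layer list \<Rightarrow> bool" where
  "weights_in S N \<longleftrightarrow> (\<forall>L\<in>set N.
      (\<forall>j i. j < layer_dout L \<and> i < layer_din L \<and> layer_W L j i \<noteq> 0 \<longrightarrow> layer_W L j i \<in> S) \<and>
      (\<forall>j. j < layer_dout L \<and> layer_b L j \<noteq> 0 \<longrightarrow> layer_b L j \<in> S))"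

definition quant_weights :: "nat \<Rightarrow> real set" where
  "quant_weights lam = insert (-1) {real k / real lam | k. 1 \<le> k \<and> k \<le> lam - 1}"

definition num_bits :: "nat \<Rightarrow> layer list \<Rightarrow> real" where
  "num_bits lam N = real (num_weights N) * log 2 (real lam)"

end

theory Submission
  imports Defs
begin

(*
  For a 1-Lipschitz f, the greedy zigzag that starts near f 0 and on every cell of the grid
  {a * delta} moves by +-sigma * delta towards f (sigma = 2 (lam - 1) / lam, so 1 <= sigma < 2)
  stays within (sigma + 1) * delta of f.  Its piecewise linear interpolation is
  c0 + sum_a m_a * ((lam - 1) / lam) * relu (x - a * delta) with integers |m_a| <= 4, and
  approximates f within 6 * delta; taking delta ~ 2^-L ~ epsilon / 6 gives the accuracy.

  Constants come from counter units h' = relu (d / lam + h / lam), which take in one base-lam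
  digit d of a numerator N per layer and so hold N / lam^T after T layers.  The hinges
  ((lam - 1) / lam) * relu (x - a * delta), a < 2^(L+1), are produced from a single one by
  L + 1 doubling levels: a hinge h is replaced by (lam - 1) / lam - h, and then
  relu ((lam - 1) / lam - ((lam - 1) / lam - h) - k), for a counter k holding
  ((lam - 1) / lam) * 2^j * delta, is h shifted by 2^j * delta.  Finally each m_a is written as a
  sum of at most 8 admissible weights.
*)

section \<open>Sparse descriptions of ReLU networks\<close>

(* A unit is its bias together with its incoming edges (source unit in the previous layer, weight). *)
type_synonym unit_spec = "real \<times> (nat \<times> real) list"

definition unit_input :: "real list \<Rightarrow> unit_spec \<Rightarrow> real" where
  "unit_input v u = fst u + sum_list (map (\<lambda>e. snd e * v ! fst e) (snd u))"

definition affine_units :: "real list \<Rightarrow> unit_spec list \<Rightarrow> real list" where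
  "affine_units v us = map (unit_input v) us"

definition relu_units :: "real list \<Rightarrow> unit_spec list \<Rightarrow> real list" where
  "relu_units v us = map relu (affine_units v us)"

definition hidden_eval :: "real list \<Rightarrow> unit_spec list list \<Rightarrow> real list" where
  "hidden_eval v uss = fold (\<lambda>us w. relu_units w us) uss v"

fun units_eval :: "real list \<Rightarrow> unit_spec list list \<Rightarrow> real list" where
  "units_eval v [] = v"
| "units_eval v [us] = affine_units v us"
| "units_eval v (us # vs # r) = units_eval (relu_units v us) (vs # r)"

lemma units_eval_snoc: "units_eval v (uss @ [us]) = affine_units (hidden_eval v uss) us"
proof (induction uss arbitrary: v)
  case Nil thus ?case by (simp add: hidden_eval_def)
next
  case (Cons a uss)
  show ?case
  proof (cases uss)
    case Nil thus ?thesis by (simp add: hidden_eval_def)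
  next
    case (Cons b r)
    have "units_eval v ((a # uss) @ [us]) = units_eval (relu_units v a) (uss @ [us])"
      using Cons by simp
    thus ?thesis using Cons.IH by (simp add: hidden_eval_def)
  qed
qed

lemma hidden_eval_Cons: "hidden_eval v (a # B) = hidden_eval (relu_units v a) B"
  by (simp add: hidden_eval_def)

definition unit_weight :: "unit_spec list \<Rightarrow> nat \<Rightarrow> nat \<Rightarrow> real" where
  "unit_weight us j i
      = (if j < length us then sum_list (map (\<lambda>e. if fst e = i then snd e else 0) (snd (us ! j))) else
      0)"

definition layer_of_units :: "nat \<Rightarrow> unit_spec list \<Rightarrow> layer" where
  "layer_of_units d us = (d, length us, unit_weight us, \<lambda>j. if j < length us then fst (us ! j) else 0)"

fun net_of_units :: "nat \<Rightarrow> unit_spec list list \<Rightarrow> layer list" where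
  "net_of_units d [] = []"
| "net_of_units d (us # r) = layer_of_units d us # net_of_units (length us) r"

definition vec_of_list :: "real list \<Rightarrow> nat \<Rightarrow> real" where
  "vec_of_list v = (\<lambda>i. if i < length v then v ! i else 0)"

fun units_wf :: "nat \<Rightarrow> unit_spec list list \<Rightarrow> bool" where
  "units_wf d [] = True"
| "units_wf d (us # r) = ((\<forall>u\<in>set us. \<forall>e\<in>set (snd u). fst e < d) \<and> units_wf (length us) r)"

lemma sum_unit_weight:
  fixes es :: "(nat \<times> real) list"
  assumes "\<forall>e\<in>set es. fst e < n"
  shows "(\<Sum>i<n. sum_list (map (\<lambda>e. if fst e = i then snd e else 0) es) * g i)
       = sum_list (map (\<lambda>e. snd e * g (fst e)) es)"
  using assms
proof (induction es)
  case Nil thus ?case by simp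
next
  case (Cons e es)
  have "(\<Sum>i<n. sum_list (map (\<lambda>e. if fst e = i then snd e else 0) (e # es)) * g i)
      = (\<Sum>i<n. (if fst e = i then snd e else 0) * g i)
        + (\<Sum>i<n. sum_list (map (\<lambda>e. if fst e = i then snd e else 0) es) * g i)"
    by (simp add: distrib_right sum.distrib)
  also have "(\<Sum>i<n. (if fst e = i then snd e else 0) * g i) = snd e * g (fst e)"
  proof -
    have "(\<Sum>i<n. (if fst e = i then snd e else 0) * g i) = (\<Sum>i<n. if fst e = i then snd e * g i else 0)"
      by (rule sum.cong) auto
    also have "\<dots> = snd e * g (fst e)" using Cons.prems by (simp add: sum.delta)
    finally show ?thesis .
  qed
  finally show ?case using Cons by simp
qed

lemma affine_layer_of_units:
  assumes "\<forall>u\<in>set us. \<forall>e\<in>set (snd u). fst e < length v"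
  shows "affine (layer_of_units (length v) us) (vec_of_list v) = vec_of_list (affine_units v us)"
proof
  fix j
  show "affine (layer_of_units (length v) us) (vec_of_list v) j = vec_of_list (affine_units v us) j"
  proof (cases "j < length us")
    case True
    have us: "us ! j \<in> set us" using True by simp
    have "(\<Sum>i<length v. unit_weight us j i * vec_of_list v i)
        = (\<Sum>i<length v. sum_list (map (\<lambda>e. if fst e = i then snd e else 0) (snd (us ! j))) * (v ! i))"
      by (rule sum.cong) (auto simp: unit_weight_def vec_of_list_def True)
    also have "\<dots> = sum_list (map (\<lambda>e. snd e * v ! fst e) (snd (us ! j)))"
      by (rule sum_unit_weight) (use assms us in blast)
    finally show ?thesis using True
      by (simp add: affine_def layer_of_units_def layer_dout_def layer_din_def layer_W_def layer_b_def
          vec_of_list_def affine_units_def unit_input_def)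
  next
    case False thus ?thesis
      by (simp add: affine_def layer_of_units_def layer_dout_def vec_of_list_def affine_units_def
          unit_input_def)
  qed
qed

lemma relu_vec_of_list: "(\<lambda>j. relu (vec_of_list w j)) = vec_of_list (map relu w)"
  by (auto simp: vec_of_list_def relu_def fun_eq_iff)

lemma length_affine_units[simp]: "length (affine_units v us) = length us"
  by (simp add: affine_units_def unit_input_def)

lemma length_relu_units[simp]: "length (relu_units v us) = length us"
  by (simp add: relu_units_def)

lemma net_eval_net_of_units:
  "units_wf (length v) uss \<Longrightarrow> uss \<noteq> [] \<Longrightarrow>
   net_eval (net_of_units (length v) uss) (vec_of_list v) = vec_of_list (units_eval v uss)"
proof (induction v uss rule: units_eval.induct)
  case (1 v) thus ?case by simp
next
  case (2 v us) thus ?case by (simp add: affine_layer_of_units)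
next
  case (3 v us vs r)
  have "net_eval (net_of_units (length v) (us # vs # r)) (vec_of_list v)
      = net_eval (net_of_units (length us) (vs # r))
          (\<lambda>j. relu (affine (layer_of_units (length v) us) (vec_of_list v) j))"
    by simp
  also have "(\<lambda>j. relu (affine (layer_of_units (length v) us) (vec_of_list v) j))
      = vec_of_list (relu_units v us)"
    using 3(2) by (simp add: affine_layer_of_units relu_vec_of_list relu_units_def)
  also have "net_eval (net_of_units (length us) (vs # r)) (vec_of_list (relu_units v us))
      = vec_of_list (units_eval (relu_units v us) (vs # r))"
    using 3 by simp
  finally show ?case by simp
qed

lemma realize_net_of_units:
  assumes "units_wf 1 uss" "uss \<noteq> []"
  shows "realize (net_of_units 1 uss) x = vec_of_list (units_eval [x] uss) 0"
proof -
  have "(\<lambda>i. if i = 0 then x else 0) = vec_of_list [x]" by (auto simp: vec_of_list_def fun_eq_iff)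
  thus ?thesis using net_eval_net_of_units[of "[x]" uss] assms by (simp add: realize_def)
qed

lemma length_net_of_units[simp]: "length (net_of_units d uss) = length uss"
  by (induction d uss rule: net_of_units.induct) auto

lemma net_of_units_chain:
  "\<forall>k. Suc k < length (net_of_units d uss) \<longrightarrow> layer_dout (net_of_units d uss ! k)
      = layer_din (net_of_units d uss ! Suc k)"
proof (induction d uss rule: net_of_units.induct)
  case (1 d) thus ?case by simp
next
  case (2 d us r)
  show ?case
  proof (intro allI impI)
    fix k assume k: "Suc k < length (net_of_units d (us # r))"
    show "layer_dout (net_of_units d (us # r) ! k) = layer_din (net_of_units d (us # r) ! Suc k)"
    proof (cases k)
      case 0
      then obtain us' r' where "r = us' # r'" using k by (cases r) auto
      thus ?thesis using 0 by (simp add: layer_of_units_def layer_dout_def layer_din_def)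
    next
      case (Suc k') thus ?thesis using 2 k by simp
    qed
  qed
qed

lemma last_net_of_units: "uss \<noteq> [] \<Longrightarrow> last (net_of_units d uss)
    = layer_of_units (if length uss = 1 then d else length (uss ! (length uss - 2))) (last uss)"
proof (induction d uss rule: net_of_units.induct)
  case (1 d) thus ?case by simp
next
  case (2 d us r)
  show ?case
  proof (cases r)
    case Nil thus ?thesis by simp
  next
    case (Cons a r')
    thus ?thesis using 2 by (auto simp: nth_Cons' split: if_splits)
  qed
qed

lemma relu_net_net_of_units:
  assumes "uss \<noteq> []" "length (last uss) = 1"
  shows "relu_net (net_of_units 1 uss)"
proof -
  have "net_of_units 1 uss \<noteq> []" using assms by (cases uss) auto
  moreover have "layer_din (hd (net_of_units 1 uss)) = 1" using assms
    by (cases uss) (auto simp: layer_of_units_def layer_din_def)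
  moreover have "layer_dout (last (net_of_units 1 uss)) = 1"
    using assms by (simp add: last_net_of_units layer_of_units_def layer_dout_def)
  ultimately show ?thesis using net_of_units_chain unfolding relu_net_def by blast
qed

lemma sum_list_map_eq_zero: "(\<forall>x\<in>set xs. f x = (0::real)) \<Longrightarrow> sum_list (map f xs) = 0"
  by (induction xs) auto

definition unit_cost :: "unit_spec \<Rightarrow> nat" where
  "unit_cost u = length (snd u) + (if fst u = 0 then 0 else 1)"

definition units_cost :: "unit_spec list \<Rightarrow> nat" where
  "units_cost us = sum_list (map unit_cost us)"

lemma layer_num_weights_layer_of_units: "layer_num_weights (layer_of_units d us) \<le> units_cost us"
proof -
  let ?n = "length us"
  have s1: "{(j, i). j < ?n \<and> i < d
      \<and> unit_weight us j i \<noteq> 0} \<subseteq> (\<Union>j<?n. (\<lambda>e. (j, fst e)) ` set (snd (us ! j)))"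
  proof
    fix p assume "p \<in> {(j, i). j < ?n \<and> i < d \<and> unit_weight us j i \<noteq> 0}"
    then obtain j i where p: "p = (j, i)" "j < ?n" "unit_weight us j i \<noteq> 0" by auto
    have "\<exists>e\<in>set (snd (us ! j)). fst e = i"
    proof (rule ccontr)
      assume "\<not> ?thesis"
      hence "unit_weight us j i = 0" using p by (auto simp: unit_weight_def intro!: sum_list_map_eq_zero)
      thus False using p by simp
    qed
    thus "p \<in> (\<Union>j<?n. (\<lambda>e. (j, fst e)) ` set (snd (us ! j)))" using p by force
  qed
  have "card {(j, i). j < ?n \<and> i < d \<and> unit_weight us j i \<noteq> 0}
      \<le> card (\<Union>j<?n. (\<lambda>e. (j, fst e)) ` set (snd (us ! j)))"
    by (rule card_mono[OF _ s1]) auto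
  also have "\<dots> \<le> (\<Sum>j<?n. card ((\<lambda>e. (j, fst e)) ` set (snd (us ! j))))"
    by (rule card_UN_le) auto
  also have "\<dots> \<le> (\<Sum>j<?n. length (snd (us ! j)))"
    by (rule sum_mono) (meson card_image_le card_length finite_set le_trans)
  finally have c1: "card {(j, i). j < ?n \<and> i < d \<and> unit_weight us j i \<noteq> 0}
      \<le> (\<Sum>j<?n. length (snd (us ! j)))" .
  have "{j. j < ?n \<and> (if j < ?n then fst (us ! j) else 0) \<noteq> 0} = {j\<in>{..<?n}. fst (us ! j) \<noteq> 0}" by auto
  moreover have "(\<Sum>j<?n. if fst (us ! j) = 0 then 0 else 1::nat)
      = sum (\<lambda>_. 1) {j\<in>{..<?n}. fst (us!j) \<noteq> 0}"
    by (subst sum.inter_filter) (auto intro: sum.cong)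
  ultimately have c2: "card {j. j < ?n \<and> (if j < ?n then fst (us ! j) else 0) \<noteq> 0}
      = (\<Sum>j<?n. if fst (us ! j) = 0 then 0 else 1)"
    by simp
  have "units_cost us = (\<Sum>j<?n. unit_cost (us ! j))"
    unfolding units_cost_def by (simp add: sum_list_sum_nth atLeast0LessThan)
  also have "\<dots> = (\<Sum>j<?n. length (snd (us ! j))) + (\<Sum>j<?n. if fst (us ! j) = 0 then 0 else 1)"
    by (simp add: unit_cost_def sum.distrib)
  finally have c3: "units_cost us = (\<Sum>j<?n. length (snd (us ! j)))
      + (\<Sum>j<?n. if fst (us ! j) = 0 then 0 else 1)" .
  have "layer_num_weights (layer_of_units d us) = card {(j, i). j < ?n \<and> i < d \<and> unit_weight us j i \<noteq> 0}
     + card {j. j < ?n \<and> (if j < ?n then fst (us ! j) else 0) \<noteq> 0}"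
    unfolding layer_num_weights_def layer_of_units_def layer_dout_def layer_din_def layer_W_def
        layer_b_def
    by (simp only: fst_conv snd_conv)
  thus ?thesis using c1 c2 c3 by linarith
qed

lemma num_weights_net_of_units: "num_weights (net_of_units d uss) \<le> sum_list (map units_cost uss)"
proof (induction d uss rule: net_of_units.induct)
  case (1 d) thus ?case by (simp add: num_weights_def)
next
  case (2 d us r)
  thus ?case using layer_num_weights_layer_of_units[of d us] by (simp add: num_weights_def)
qed

(* Sources must be distinct: parallel edges would add up to a weight outside S in unit_weight. *)
definition unit_weights_in :: "real set \<Rightarrow> unit_spec \<Rightarrow> bool" where
  "unit_weights_in S u \<longleftrightarrow> (fst u \<noteq> 0 \<longrightarrow> fst u \<in> S) \<and> distinct (map fst (snd u))
      \<and> (\<forall>e\<in>set (snd u). snd e \<in> S)"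

lemma unit_weight_mem:
  fixes es :: "(nat \<times> real) list"
  assumes "distinct (map fst es)" "\<forall>e\<in>set es. snd e \<in> S"
    "sum_list (map (\<lambda>e. if fst e = i then snd e else 0) es) \<noteq> 0"
  shows "sum_list (map (\<lambda>e. if fst e = i then snd e else 0) es) \<in> S"
  using assms
proof (induction es)
  case Nil thus ?case by simp
next
  case (Cons e es)
  show ?case
  proof (cases "fst e = i")
    case True
    hence "sum_list (map (\<lambda>e. if fst e = i then snd e else (0::real)) es) = 0"
      using Cons.prems(1) by (auto simp: image_iff intro!: sum_list_map_eq_zero)
    thus ?thesis using True Cons.prems by simp
  next
    case False thus ?thesis using Cons by simp
  qed
qed

lemma weights_in_net_of_units:
  assumes "\<forall>us\<in>set uss. \<forall>u\<in>set us. unit_weights_in S u"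
  shows "weights_in S (net_of_units d uss)"
  using assms
proof (induction d uss rule: net_of_units.induct)
  case (1 d) thus ?case by (simp add: weights_in_def)
next
  case (2 d us r)
  have "\<forall>j i. j < length us \<and> i < d \<and> unit_weight us j i \<noteq> 0 \<longrightarrow> unit_weight us j i \<in> S"
  proof (intro allI impI)
    fix j i assume h: "j < length us \<and> i < d \<and> unit_weight us j i \<noteq> 0"
    hence g: "unit_weights_in S (us ! j)" using 2(2) by simp
    have ne: "sum_list (map (\<lambda>e. if fst e = i then snd e else 0) (snd (us ! j))) \<noteq> 0"
      using h unfolding unit_weight_def by (metis (no_types, lifting))
    have "sum_list (map (\<lambda>e. if fst e = i then snd e else 0) (snd (us ! j))) \<in> S"
      by (rule unit_weight_mem[OF _ _ ne]) (use g in \<open>simp_all add: unit_weights_in_def\<close>)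
    thus "unit_weight us j i \<in> S" using h unfolding unit_weight_def by (metis (no_types, lifting))
  qed
  moreover have "\<forall>j. j < length us \<and> fst (us ! j) \<noteq> 0 \<longrightarrow> fst (us ! j) \<in> S"
    using 2(2) by (simp add: unit_weights_in_def)
  ultimately have A: "\<forall>j i. j < layer_dout (layer_of_units d us) \<and> i < layer_din (layer_of_units d us)
      \<and> layer_W (layer_of_units d us) j i \<noteq> 0 \<longrightarrow> layer_W (layer_of_units d us) j i \<in> S"
     and B: "\<forall>j. j < layer_dout (layer_of_units d us) \<and> layer_b (layer_of_units d us) j \<noteq> 0
         \<longrightarrow> layer_b (layer_of_units d us) j \<in> S"
    unfolding layer_of_units_def layer_dout_def layer_din_def layer_W_def layer_b_def by simp_all
  have IH: "weights_in S (net_of_units (length us) r)" using 2 by simp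
  have "net_of_units d (us # r) = layer_of_units d us # net_of_units (length us) r" by simp
  thus ?case using A B IH unfolding weights_in_def by (metis set_ConsD)
qed


section \<open>Counters and hinge units\<close>

definition top_weight :: "nat \<Rightarrow> real" where "top_weight lam = real (lam - 1) / real lam"

definition counter_value :: "nat \<Rightarrow> nat \<Rightarrow> nat \<Rightarrow> real" where
  "counter_value lam N t = real (N mod lam ^ t) / real (lam ^ t)"

definition digit :: "nat \<Rightarrow> nat \<Rightarrow> nat \<Rightarrow> nat" where
  "digit lam N t = N div lam ^ t mod lam"

(* Layer t feeds the t-th lowest base-lam digit of Ns ! h into counter h (the first layer has no
   incoming edge), so after t layers counter h holds counter_value lam (Ns ! h) t. *)
definition counter_units :: "nat \<Rightarrow> nat list \<Rightarrow> nat \<Rightarrow> unit_spec list" where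
  "counter_units lam Ns t = map (\<lambda>h. (real (digit lam (Ns ! h) (t - 1)) / real lam,
      if t = Suc 0 then [] else [(h, 1 / real lam)])) [0..<length Ns]"

lemma counter_value_nonneg: "counter_value lam N t \<ge> 0" by (simp add: counter_value_def)

lemma relu_eq_self: "x \<ge> 0 \<Longrightarrow> relu x = x" by (simp add: relu_def)
lemma relu_nonneg: "relu x \<ge> 0" by (simp add: relu_def)

lemma counter_value_Suc:
  assumes "lam > 0"
  shows "counter_value lam N (Suc t) = real (digit lam N t) / real lam
      + 1 / real lam * counter_value lam N t"
proof -
  have "N mod (lam ^ t * lam) = lam ^ t * (N div lam ^ t mod lam) + N mod lam ^ t"
    by (rule mod_mult2_eq)
  hence "N mod lam ^ Suc t = lam ^ t * digit lam N t + N mod lam ^ t"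
    by (metis digit_def power_Suc2)
  hence e: "real (N mod lam ^ Suc t) = real (lam ^ t) * real (digit lam N t) + real (N mod lam ^ t)"
    by (metis of_nat_add of_nat_mult)
  have pos: "real lam > 0" "real (lam ^ t) > 0" using assms by auto
  show ?thesis unfolding counter_value_def e using pos
    by (simp add: field_simps power_Suc2)
qed

lemma counter_value_1: "counter_value lam N 1 = real (digit lam N 0) / real lam"
  by (simp add: counter_value_def digit_def)

lemma relu_units_append: "relu_units v (A @ B) = relu_units v A @ relu_units v B"
  by (simp add: relu_units_def affine_units_def unit_input_def)

lemma relu_units_counter_units:
  assumes "t \<ge> 1" "\<forall>h<length Ns. v ! h = counter_value lam (Ns ! h) t" "lam \<ge> 2"
  shows "relu_units v (counter_units lam Ns (Suc t)) = map (\<lambda>N. counter_value lam N (Suc t)) Ns"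
proof (rule nth_equalityI)
  show "length (relu_units v (counter_units lam Ns (Suc t)))
      = length (map (\<lambda>N. counter_value lam N (Suc t)) Ns)"
    by (simp add: counter_units_def)
next
  fix h assume "h < length (relu_units v (counter_units lam Ns (Suc t)))"
  hence h: "h < length Ns" by (simp add: counter_units_def)
  have "relu_units v (counter_units lam Ns (Suc t)) ! h
      = relu (real (digit lam (Ns ! h) t) / real lam + 1 / real lam * counter_value lam (Ns ! h) t)"
    using h assms by (simp add: relu_units_def affine_units_def unit_input_def counter_units_def)
  also have "\<dots> = counter_value lam (Ns ! h) (Suc t)"
    using counter_value_Suc[of lam] assms(3) counter_value_nonneg
    by (metis relu_eq_self not_numeral_le_zero not_gr0)
  finally show "relu_units v (counter_units lam Ns (Suc t)) ! h
      = map (\<lambda>N. counter_value lam N (Suc t)) Ns ! h"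
    using h by simp
qed

lemma relu_units_counter_units_1:
  "relu_units v (counter_units lam Ns 1) = map (\<lambda>N. counter_value lam N 1) Ns"
proof (rule nth_equalityI)
  show "length (relu_units v (counter_units lam Ns 1)) = length (map (\<lambda>N. counter_value lam N 1) Ns)"
    by (simp add: counter_units_def)
next
  fix h assume "h < length (relu_units v (counter_units lam Ns 1))"
  hence h: "h < length Ns" by (simp add: counter_units_def)
  have "relu_units v (counter_units lam Ns 1) ! h = relu (real (digit lam (Ns ! h) 0) / real lam)"
    using h by (simp add: relu_units_def affine_units_def unit_input_def counter_units_def)
  also have "\<dots> = counter_value lam (Ns ! h) 1"
    using counter_value_1 counter_value_nonneg by (metis relu_eq_self)
  finally show "relu_units v (counter_units lam Ns 1) ! h = map (\<lambda>N. counter_value lam N 1) Ns ! h"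
    using h by simp
qed

definition hinge_value :: "nat \<Rightarrow> real \<Rightarrow> real \<Rightarrow> nat \<times> real \<Rightarrow> real" where
  "hinge_value lam x \<delta> l = top_weight lam * relu (x - real (fst l) * \<delta>)"

(* A label (a, w) stands for a hinge unit with shift a; w is its weight in the output layer. *)
definition level_state :: "nat \<Rightarrow> nat list \<Rightarrow> real \<Rightarrow> real \<Rightarrow> nat \<Rightarrow> (nat \<times> real) list \<Rightarrow> real list" where
  "level_state lam Ns x \<delta> t labels = map (\<lambda>N. counter_value lam N t) Ns
      @ map (hinge_value lam x \<delta>) labels"

definition input_units :: "nat \<Rightarrow> nat list \<Rightarrow> unit_spec list" where
  "input_units lam Ns = counter_units lam Ns 1 @ [(0, [(0, top_weight lam)])]"

(* A level is two layers: each hinge h first becomes top_weight lam - h >= 0; then every child of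
   h takes relu (top_weight lam - (top_weight lam - h) - k), where the counter k is omitted for an
   unshifted child and holds top_weight lam * s * delta for a child shifted by s (relu_shift). *)
definition complement_units :: "nat \<Rightarrow> nat list \<Rightarrow> (nat \<times> real) list \<Rightarrow> nat \<Rightarrow> unit_spec list" where
  "complement_units lam Ns labels t = counter_units lam Ns (Suc t) @
     map (\<lambda>p. (top_weight lam, [(length Ns + p, -1)])) [0..<length labels]"

definition branch_units :: "nat \<Rightarrow> nat list \<Rightarrow> nat \<Rightarrow> (nat \<times> real \<Rightarrow> (bool \<times> real) list)
    \<Rightarrow> (nat \<times> real) list \<Rightarrow> nat \<Rightarrow> unit_spec list" where
  "branch_units lam Ns c ch labels t = counter_units lam Ns (Suc (Suc t)) @
     concat (map (\<lambda>p. map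
         (\<lambda>z. (top_weight lam, if fst z then [(length Ns + p, -1), (c, -1)] else [(length Ns + p, -1)]))
        (ch (labels ! p))) [0..<length labels])"

definition branch_labels :: "nat \<Rightarrow> (nat \<times> real \<Rightarrow> (bool \<times> real) list) \<Rightarrow> (nat \<times> real) list
    \<Rightarrow> (nat \<times> real) list" where
  "branch_labels s ch labels
      = concat (map (\<lambda>p. map (\<lambda>z. (if fst z then fst (labels ! p) + s else fst (labels ! p), snd z))
        (ch (labels ! p))) [0..<length labels])"

lemma top_weight_bounds: "lam \<ge> 2 \<Longrightarrow> top_weight lam \<ge> 1/2 \<and> top_weight lam < 1"
  by (auto simp: top_weight_def field_simps of_nat_diff)

lemma hinge_value_bounds:
  assumes "lam \<ge> 2" "0 \<le> x" "x \<le> 1" "\<delta> \<ge> 0"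
  shows "hinge_value lam x \<delta> l \<ge> 0" "hinge_value lam x \<delta> l \<le> top_weight lam"
proof -
  have r: "top_weight lam \<ge> 0" using top_weight_bounds[OF assms(1)] by simp
  show "hinge_value lam x \<delta> l \<ge> 0" using r by (simp add: hinge_value_def relu_nonneg)
  have "real (fst l) * \<delta> \<ge> 0" using assms by simp
  hence "x - real (fst l) * \<delta> \<le> 1" using assms by linarith
  hence "relu (x - real (fst l) * \<delta>) \<le> 1" by (simp add: relu_def)
  thus "hinge_value lam x \<delta> l \<le> top_weight lam" using r unfolding hinge_value_def
    by (metis mult_left_mono mult.right_neutral)
qed

lemma relu_units_input_units:
  assumes "lam \<ge> 2" "0 \<le> x" "x \<le> 1"
  shows "relu_units [x] (input_units lam Ns) = level_state lam Ns x \<delta> 1 [(0, 0)]"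
proof -
  have "relu_units [x] [(0, [(0, top_weight lam)])] = [relu (top_weight lam * x)]"
    by (simp add: relu_units_def affine_units_def unit_input_def)
  also have "\<dots> = [hinge_value lam x \<delta> (0, 0)]" using top_weight_bounds[OF assms(1)] assms
    by (simp add: hinge_value_def relu_def)
  finally show ?thesis
    using relu_units_counter_units_1 by (simp add: input_units_def relu_units_append level_state_def)
qed


lemma relu_shift:
  assumes "r > 0" "c \<ge> 0"
  shows "relu (r * relu z - r * c) = r * relu (z - c)"
proof -
  have "relu (relu z - c) = relu (z - c)" using assms by (simp add: relu_def)
  moreover have "relu (r * y) = r * relu y" for y
    using assms(1) by (simp add: relu_def max_mult_distrib_left)
  ultimately show ?thesis by (metis right_diff_distrib)
qed

lemma concat_map_map_cong: "(\<And>p z. p \<in> set ps \<Longrightarrow> z \<in> set (L p) \<Longrightarrow> f p z = g p z) \<Longrightarrow>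
  concat (map (\<lambda>p. map (f p) (L p)) ps) = concat (map (\<lambda>p. map (g p) (L p)) ps)"
  by (metis (mono_tags, lifting) map_eq_conv)

lemma relu_units_concat: "relu_units w (concat (map (\<lambda>p. map (U p) (L p)) ps))
    = concat (map (\<lambda>p. map (\<lambda>z. relu (unit_input w (U p z))) (L p)) ps)"
  by (simp add: relu_units_def affine_units_def map_concat o_def)

lemma map_concat_map: "map F (concat (map (\<lambda>p. map (U p) (L p)) ps))
    = concat (map (\<lambda>p. map (\<lambda>z. F (U p z)) (L p)) ps)"
  by (simp add: map_concat o_def)

lemma nth_level_state_counter: "h < length Ns \<Longrightarrow> level_state lam Ns x \<delta> t labels ! h
    = counter_value lam (Ns ! h) t"
  by (simp add: level_state_def nth_append)

lemma nth_level_state_hinge: "p < length labels \<Longrightarrow> level_state lam Ns x \<delta> t labels ! (length Ns + p)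
    = hinge_value lam x \<delta> (labels ! p)"
  by (simp add: level_state_def nth_append)

lemma relu_units_complement_units:
  assumes lam: "lam \<ge> 2" and x: "0 \<le> x" "x \<le> 1" and d: "\<delta> \<ge> 0" and t: "t \<ge> 1"
  shows "relu_units (level_state lam Ns x \<delta> t labels) (complement_units lam Ns labels t)
       = map (\<lambda>N. counter_value lam N (Suc t)) Ns
           @ map (\<lambda>l. top_weight lam - hinge_value lam x \<delta> l) labels"
proof -
  let ?v = "level_state lam Ns x \<delta> t labels"
  have "relu_units ?v (map (\<lambda>p. (top_weight lam, [(length Ns + p, -1)])) [0..<length labels])
      = map (\<lambda>p. relu (top_weight lam - ?v ! (length Ns + p))) [0..<length labels]"
    by (simp add: relu_units_def affine_units_def unit_input_def)
  also have "\<dots> = map (\<lambda>p. top_weight lam - hinge_value lam x \<delta> (labels ! p)) [0..<length labels]"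
    using hinge_value_bounds[OF lam x d] by (auto simp: nth_level_state_hinge relu_def)
  also have "\<dots> = map (\<lambda>l. top_weight lam - hinge_value lam x \<delta> l) labels"
    by (rule nth_equalityI) simp_all
  finally show ?thesis
    using relu_units_counter_units[OF t _ lam, of Ns ?v]
    by (simp add: complement_units_def relu_units_append nth_level_state_counter)
qed

lemma relu_hinge_branch:
  assumes lam: "lam \<ge> 2" and x: "0 \<le> x" "x \<le> 1" and d: "\<delta> \<ge> 0"
    and wi: "w ! i = top_weight lam - hinge_value lam x \<delta> (a, v)"
    and wc: "b \<Longrightarrow> w ! c = top_weight lam * (real s * \<delta>)"
  shows "relu (unit_input w (top_weight lam, if b then [(i, -1), (c, -1)] else [(i, -1)]))
       = hinge_value lam x \<delta> (if b then a + s else a, v')"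
proof (cases b)
  case True
  have "relu (unit_input w (top_weight lam, [(i, -1), (c, -1)]))
      = relu (top_weight lam * relu (x - real a * \<delta>) - top_weight lam * (real s * \<delta>))"
    using wi wc[OF True] by (simp add: unit_input_def hinge_value_def)
  also have "\<dots> = top_weight lam * relu (x - real a * \<delta> - real s * \<delta>)"
    using top_weight_bounds[OF lam] d by (intro relu_shift) auto
  finally show ?thesis using True by (simp add: hinge_value_def algebra_simps)
next
  case False
  thus ?thesis using wi hinge_value_bounds(1)[OF lam x d, of "(a, v)"]
    by (simp add: unit_input_def hinge_value_def relu_def)
qed

lemma relu_units_branch_level:
  assumes lam: "lam \<ge> 2" and x: "0 \<le> x" "x \<le> 1" and d: "\<delta> \<ge> 0" and t: "t \<ge> 1" and c: "c < length Ns"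
    and shift: "\<forall>p<length labels. \<forall>z\<in>set (ch (labels ! p)). fst z \<longrightarrow> counter_value lam (Ns ! c) (Suc t)
        = top_weight lam * real s * \<delta>"
  shows "relu_units (relu_units (level_state lam Ns x \<delta> t labels) (complement_units lam Ns labels t))
      (branch_units lam Ns c ch labels t)
       = level_state lam Ns x \<delta> (Suc (Suc t)) (branch_labels s ch labels)"
proof -
  define w where "w = map (\<lambda>N. counter_value lam N (Suc t)) Ns
      @ map (\<lambda>l. top_weight lam - hinge_value lam x \<delta> l) labels"
  have hw: "relu_units (level_state lam Ns x \<delta> t labels) (complement_units lam Ns labels t) = w"
    unfolding w_def by (rule relu_units_complement_units[OF lam x d t])
  have wh: "\<forall>h<length Ns. w ! h = counter_value lam (Ns ! h) (Suc t)" by (simp add: w_def nth_append)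
  have u1: "relu_units w (counter_units lam Ns (Suc (Suc t)))
      = map (\<lambda>N. counter_value lam N (Suc (Suc t))) Ns"
    by (rule relu_units_counter_units[OF _ wh lam]) simp
  have u2: "relu_units w
      (concat (map (\<lambda>p. map
      (\<lambda>z. (top_weight lam, if fst z then [(length Ns + p, -1), (c, -1)] else [(length Ns + p, -1)]))
        (ch (labels ! p))) [0..<length labels]))
     = map (hinge_value lam x \<delta>) (branch_labels s ch labels)"
    unfolding branch_labels_def relu_units_concat map_concat_map
  proof (rule concat_map_map_cong)
    fix p z assume "p \<in> set [0..<length labels]" and z: "z \<in> set (ch (labels ! p))"
    hence p: "p < length labels" by simp
    show "relu (unit_input w
        (top_weight lam, if fst z then [(length Ns + p, - 1), (c, - 1)] else [(length Ns + p, - 1)])) =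
        hinge_value lam x \<delta> (if fst z then fst (labels ! p) + s else fst (labels ! p), snd z)"
      by (rule relu_hinge_branch[OF lam x d, where v = "snd (labels ! p)"])
        (use p z wh c shift in \<open>auto simp: w_def nth_append\<close>)
  qed
  show ?thesis
    unfolding hw branch_units_def relu_units_append u1 u2 level_state_def[of lam Ns x \<delta> "Suc (Suc t)"] ..
qed


(* A level (c, s, ch): counter c supplies the shift s, and ch l lists the children of label l as
   (shifted?, output weight). *)
type_synonym branch_step = "nat \<times> nat \<times> (nat \<times> real \<Rightarrow> (bool \<times> real) list)"

fun branch_layers :: "nat \<Rightarrow> nat list \<Rightarrow> nat \<Rightarrow> (nat \<times> real) list \<Rightarrow> branch_step list
    \<Rightarrow> unit_spec list list" where
  "branch_layers lam Ns t labels [] = []"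
| "branch_layers lam Ns t labels ((c, s, ch) # ds) =
     complement_units lam Ns labels t # branch_units lam Ns c ch labels t # branch_layers lam Ns
         (Suc (Suc t)) (branch_labels s ch labels) ds"

fun final_labels :: "(nat \<times> real) list \<Rightarrow> branch_step list \<Rightarrow> (nat \<times> real) list" where
  "final_labels labels [] = labels"
| "final_labels labels ((c, s, ch) # ds) = final_labels (branch_labels s ch labels) ds"

definition branch_step_ok :: "nat \<Rightarrow> nat list \<Rightarrow> real \<Rightarrow> nat \<Rightarrow> branch_step \<Rightarrow> bool" where
  "branch_step_ok lam Ns \<delta> t d = (case d of (c, s, ch) \<Rightarrow> c < length Ns \<and>
      (\<forall>l. \<forall>z\<in>set (ch l). fst z \<longrightarrow> counter_value lam (Ns ! c) (Suc t) = top_weight lam * real s * \<delta>))"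

lemma hidden_eval_branch_layers:
  assumes lam: "lam \<ge> 2" and x: "0 \<le> x" "x \<le> 1" and d: "\<delta> \<ge> 0" and t: "t \<ge> 1"
    and ok: "\<forall>i<length ds. branch_step_ok lam Ns \<delta> (t + 2 * i) (ds ! i)"
  shows "hidden_eval (level_state lam Ns x \<delta> t labels) (branch_layers lam Ns t labels ds)
      = level_state lam Ns x \<delta> (t + 2 * length ds) (final_labels labels ds)"
  using t ok
proof (induction ds arbitrary: t labels)
  case Nil thus ?case by (simp add: hidden_eval_def)
next
  case (Cons dd ds)
  obtain c s ch where dd: "dd = (c, s, ch)" by (cases dd) auto
  have ok0: "branch_step_ok lam Ns \<delta> t dd" using Cons.prems(2)
      by (metis add.right_neutral length_greater_0_conv list.distinct(1) mult_0_right nth_Cons_0)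
  hence c: "c < length Ns" and sh: "\<forall>l. \<forall>z\<in>set (ch l). fst z \<longrightarrow> counter_value lam (Ns ! c) (Suc t)
      = top_weight lam * real s * \<delta>"
    using dd by (auto simp: branch_step_ok_def)
  have lev: "relu_units
      (relu_units (level_state lam Ns x \<delta> t labels) (complement_units lam Ns labels t))
      (branch_units lam Ns c ch labels t)
       = level_state lam Ns x \<delta> (Suc (Suc t)) (branch_labels s ch labels)"
    using relu_units_branch_level[OF lam x d Cons.prems(1) c, of labels ch s] sh by blast
  have ok': "\<forall>i<length ds. branch_step_ok lam Ns \<delta> (Suc (Suc t) + 2 * i) (ds ! i)"
  proof (intro allI impI)
    fix i assume "i < length ds"
    hence "Suc i < length (dd # ds)" by simp
    hence "branch_step_ok lam Ns \<delta> (t + 2 * Suc i) ((dd # ds) ! Suc i)" using Cons.prems(2) by blast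
    thus "branch_step_ok lam Ns \<delta> (Suc (Suc t) + 2 * i) (ds ! i)" by simp
  qed
  have "hidden_eval (level_state lam Ns x \<delta> t labels) (branch_layers lam Ns t labels (dd # ds))
      = hidden_eval (level_state lam Ns x \<delta> (Suc (Suc t)) (branch_labels s ch labels))
          (branch_layers lam Ns (Suc (Suc t)) (branch_labels s ch labels) ds)"
    using lev by (simp add: dd hidden_eval_Cons)
  also have "\<dots> = level_state lam Ns x \<delta> (Suc (Suc t) + 2 * length ds)
      (final_labels (branch_labels s ch labels) ds)"
    by (rule Cons.IH) (use Cons.prems ok' in auto)
  finally show ?case by (simp add: dd)
qed

lemma final_labels_append: "final_labels labels (ds1 @ ds2) = final_labels (final_labels labels ds1) ds2"
  by (induction labels ds1 rule: final_labels.induct) auto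

lemma length_branch_layers: "length (branch_layers lam Ns t labels ds) = 2 * length ds"
  by (induction lam Ns t labels ds rule: branch_layers.induct) auto

lemma length_counter_units[simp]: "length (counter_units lam Ns t) = length Ns"
    by (simp add: counter_units_def)

lemma length_branch_labels: "length (branch_labels s ch labels)
    = sum_list (map (\<lambda>p. length (ch (labels ! p))) [0..<length labels])"
  by (simp add: branch_labels_def length_concat o_def)

lemma length_branch_units: "length (branch_units lam Ns c ch labels t) = length Ns
    + length (branch_labels s ch labels)"
  by (simp add: branch_units_def length_branch_labels length_concat o_def)

lemma length_complement_units: "length (complement_units lam Ns labels t) = length Ns + length labels"
  by (simp add: complement_units_def)


lemma units_wf_branch_layers:
  assumes "\<forall>i<length ds. fst (ds ! i) < length Ns"
    and "units_wf (length Ns + length (final_labels labels ds)) rest"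
  shows "units_wf (length Ns + length labels) (branch_layers lam Ns t labels ds @ rest)"
  using assms
proof (induction lam Ns t labels ds rule: branch_layers.induct)
  case (1 lam Ns t labels) thus ?case by simp
next
  case (2 lam Ns t labels c s ch ds)
  have c: "c < length Ns" using "2.prems"(1)
      by (metis fst_conv length_greater_0_conv list.discI nth_Cons_0)
  have r: "\<forall>i<length ds. fst (ds ! i) < length Ns" using "2.prems"(1) by auto
  have a: "\<forall>u\<in>set (complement_units lam Ns labels t). \<forall>e\<in>set (snd u). fst e < length Ns + length labels"
    by (auto simp: complement_units_def counter_units_def split: if_splits)
  have b: "\<forall>u\<in>set (branch_units lam Ns c ch labels t). \<forall>e\<in>set (snd u). fst e
      < length (complement_units lam Ns labels t)"
    using c by (auto simp: branch_units_def counter_units_def length_complement_units split: if_splits)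
  have IH: "units_wf (length Ns + length (branch_labels s ch labels))
      (branch_layers lam Ns (Suc (Suc t)) (branch_labels s ch labels) ds @ rest)"
    using 2 r by simp
  show ?case using a b IH by (simp add: length_branch_units[of lam Ns c ch labels t s])
qed

lemma units_cost_le: "(\<forall>u\<in>set us. unit_cost u \<le> k) \<Longrightarrow> units_cost us \<le> k * length us"
  by (induction us) (auto simp: units_cost_def)

lemma units_cost_complement_units: "units_cost (complement_units lam Ns labels t)
    \<le> 2 * (length Ns + length labels)"
proof -
  have "\<forall>u\<in>set (complement_units lam Ns labels t). unit_cost u \<le> 2"
      by (auto simp: complement_units_def counter_units_def unit_cost_def)
  thus ?thesis using units_cost_le[of "complement_units lam Ns labels t" 2]
      by (simp add: length_complement_units)
qed

lemma units_cost_branch_units: "units_cost (branch_units lam Ns c ch labels t)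
    \<le> 3 * (length Ns + length (branch_labels s ch labels))"
proof -
  have "\<forall>u\<in>set (branch_units lam Ns c ch labels t). unit_cost u \<le> 3"
      by (auto simp: branch_units_def counter_units_def unit_cost_def)
  thus ?thesis using units_cost_le[of "branch_units lam Ns c ch labels t" 3]
      by (simp add: length_branch_units[of lam Ns c ch labels t s])
qed

fun branch_cost :: "nat \<Rightarrow> (nat \<times> real) list \<Rightarrow> branch_step list \<Rightarrow> nat" where
  "branch_cost H labels [] = 0"
| "branch_cost H labels ((c, s, ch) # ds) = 5 * H + 2 * length labels
    + 3 * length (branch_labels s ch labels) + branch_cost H (branch_labels s ch labels) ds"

lemma units_cost_branch_layers: "sum_list (map units_cost (branch_layers lam Ns t labels ds))
    \<le> branch_cost (length Ns) labels ds"
proof (induction lam Ns t labels ds rule: branch_layers.induct)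
  case (1 lam Ns t labels) thus ?case by simp
next
  case (2 lam Ns t labels c s ch ds)
  thus ?case using units_cost_complement_units[of lam Ns labels t]
      units_cost_branch_units[of lam Ns c ch labels t s] by simp
qed

lemma branch_cost_append: "branch_cost H labels (ds1 @ ds2) = branch_cost H labels ds1
    + branch_cost H (final_labels labels ds1) ds2"
  by (induction H labels ds1 rule: branch_cost.induct) auto


section \<open>Functions in \<open>F11\<close> are 1-Lipschitz\<close>

lemma has_integral_bound_AE:
  fixes g :: "real \<Rightarrow> real"
  assumes I: "(g has_integral I) {a..b}" and ab: "a \<le> b" and B: "0 \<le> B"
    and bound: "AE t in lebesgue. t \<in> {a..b} \<longrightarrow> \<bar>g t\<bar> \<le> B"
  shows "\<bar>I\<bar> \<le> B * (b - a)"
proof -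
  obtain N where N: "{t \<in> space lebesgue. \<not> (t \<in> {a..b} \<longrightarrow> \<bar>g t\<bar> \<le> B)} \<subseteq> N"
    "emeasure lebesgue N = 0" "N \<in> sets lebesgue"
    using bound by (rule AE_E)
  have "negligible N" using N by (simp add: negligible_iff_null_sets null_sets_def)
  hence "((\<lambda>t. if t \<in> N then 0 else g t) has_integral I) {a..b}"
    by (rule has_integral_spike[OF _ _ I]) auto
  moreover have "norm (if t \<in> N then 0 else g t) \<le> B" if "t \<in> {a..b} - {}" for t
    using N(1) that B by auto
  ultimately have "norm I \<le> B * Henstock_Kurzweil_Integration.content {a..b}"
    using B by (intro has_integral_bound_real[where S = "{}"]) auto
  thus ?thesis using ab by (simp add: content_real)
qed

lemma F11_lipschitz:
  assumes "f \<in> F11" and "x \<in> {0..1}" "y \<in> {0..1}"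
  shows "\<bar>f x - f y\<bar> \<le> \<bar>x - y\<bar>"
proof -
  obtain g where gi: "g integrable_on {0..1}" and gx: "\<forall>x\<in>{0..1}. (g has_integral (f x - f 0)) {0..x}"
    and gae: "AE x in lebesgue. x \<in> {0..1} \<longrightarrow> \<bar>g x\<bar> \<le> 1"
    using assms(1) unfolding F11_def by blast
  have ord: "\<bar>f x - f y\<bar> \<le> x - y" if xy: "0 \<le> y" "y \<le> x" "x \<le> 1" for x y
  proof -
    have "g integrable_on {y..x}" by (rule integrable_on_subinterval[OF gi]) (use xy in auto)
    then obtain I where I: "(g has_integral I) {y..x}" by blast
    have "(g has_integral (f y - f 0 + I)) {0..x}"
      by (rule has_integral_combine[of 0 y x]) (use xy gx I in auto)
    moreover have "(g has_integral (f x - f 0)) {0..x}" using gx xy by auto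
    ultimately have "f y - f 0 + I = f x - f 0" using has_integral_unique by blast
    hence "I = f x - f y" by simp
    moreover have "AE t in lebesgue. t \<in> {y..x} \<longrightarrow> \<bar>g t\<bar> \<le> 1"
      by (rule eventually_mono[OF gae]) (use xy in auto)
    hence "\<bar>I\<bar> \<le> 1 * (x - y)" by (rule has_integral_bound_AE[OF I xy(2) zero_le_one])
    ultimately show ?thesis by simp
  qed
  show ?thesis
    using ord[of y x] ord[of x y] assms(2,3) by (cases "y \<le> x") (auto simp: abs_minus_commute)
qed

lemma F11_abs_at_0:
  assumes "f \<in> F11"
  shows "\<bar>f 0\<bar> \<le> 1"
proof (rule ccontr)
  assume c: "\<not> \<bar>f 0\<bar> \<le> 1"
  have fae: "AE x in lebesgue. x \<in> {0..1} \<longrightarrow> \<bar>f x\<bar> \<le> 1"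
    using assms unfolding F11_def by blast
  obtain N2 where N2: "{x \<in> space lebesgue. \<not> (x \<in> {0..1} \<longrightarrow> \<bar>f x\<bar> \<le> 1)} \<subseteq> N2"
    "emeasure lebesgue N2 = 0" "N2 \<in> sets lebesgue"
    using fae by (rule AE_E)
  have negN2: "negligible N2" using N2 by (simp add: negligible_iff_null_sets null_sets_def)
  define \<eta> where "\<eta> = min 1 ((\<bar>f 0\<bar> - 1) / 2)"
  have eta: "\<eta> > 0" "\<eta> \<le> 1" using c by (auto simp: \<eta>_def)
  have "{0..\<eta>} \<subseteq> N2"
  proof
    fix x assume x: "x \<in> {0..\<eta>}"
    have "\<bar>f x - f 0\<bar> \<le> x - 0" using F11_lipschitz[OF assms, of x 0] x eta by auto
    moreover have "2 * x \<le> \<bar>f 0\<bar> - 1" using x by (auto simp: \<eta>_def)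
    moreover have "\<bar>f 0\<bar> - \<bar>f x\<bar> \<le> \<bar>f x - f 0\<bar>"
      using abs_triangle_ineq2[of "f 0" "f x"] by (simp add: abs_minus_commute)
    ultimately have "\<bar>f x\<bar> > 1" using c x by simp
    thus "x \<in> N2" using N2(1) x eta by auto
  qed
  hence "negligible {0..\<eta>}" using negN2 negligible_subset by blast
  moreover have "box 0 \<eta> \<noteq> {}" using eta by (auto simp: box_real)
  ultimately show False using negligible_interval(1)[of 0 \<eta>] by (metis cbox_interval)
qed

section \<open>Zigzag interpolation of Lipschitz functions\<close>

fun zigzag :: "(real \<Rightarrow> real) \<Rightarrow> real \<Rightarrow> real \<Rightarrow> real \<Rightarrow> nat \<Rightarrow> real" where
  "zigzag F c0 \<sigma> \<delta> 0 = c0"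
| "zigzag F c0 \<sigma> \<delta> (Suc i) = zigzag F c0 \<sigma> \<delta> i
    + (if zigzag F c0 \<sigma> \<delta> i \<le> F (real i * \<delta>) then \<sigma> * \<delta> else - (\<sigma> * \<delta>))"

definition zigzag_sign :: "(real \<Rightarrow> real) \<Rightarrow> real \<Rightarrow> real \<Rightarrow> real \<Rightarrow> nat \<Rightarrow> int" where
  "zigzag_sign F c0 \<sigma> \<delta> i = (if zigzag F c0 \<sigma> \<delta> i \<le> F (real i * \<delta>) then 1 else -1)"

definition zigzag_coeff :: "(real \<Rightarrow> real) \<Rightarrow> real \<Rightarrow> real \<Rightarrow> real \<Rightarrow> nat \<Rightarrow> int" where
  "zigzag_coeff F c0 \<sigma> \<delta> a = (if a = 0 then 2 * zigzag_sign F c0 \<sigma> \<delta> 0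
     else 2 * (zigzag_sign F c0 \<sigma> \<delta> a - zigzag_sign F c0 \<sigma> \<delta> (a - 1)))"

lemma zigzag_coeff_bound: "\<bar>zigzag_coeff F c0 \<sigma> \<delta> a\<bar> \<le> 4"
  by (auto simp: zigzag_coeff_def zigzag_sign_def)

lemma zigzag_Suc_sign: "zigzag F c0 \<sigma> \<delta> (Suc i) = zigzag F c0 \<sigma> \<delta> i
    + real_of_int (zigzag_sign F c0 \<sigma> \<delta> i) * \<sigma> * \<delta>"
  by (simp add: zigzag_sign_def)

lemma zigzag_tracks:
  assumes lip: "\<And>s t. 0 \<le> s \<Longrightarrow> 0 \<le> t \<Longrightarrow> \<bar>F s - F t\<bar> \<le> \<bar>s - t\<bar>"
    and d: "\<delta> > 0" and s: "\<sigma> \<ge> 1" and c0: "\<bar>c0 - F 0\<bar> \<le> \<delta>"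
  shows "\<bar>zigzag F c0 \<sigma> \<delta> i - F (real i * \<delta>)\<bar> \<le> (\<sigma> + 1) * \<delta>"
proof (induction i)
  case 0
  have "\<delta> \<le> (\<sigma> + 1) * \<delta>" using s d by (simp add: algebra_simps)
  thus ?case using c0 by simp
next
  case (Suc i)
  have l: "\<bar>F (real (Suc i) * \<delta>) - F (real i * \<delta>)\<bar> \<le> \<delta>"
    using lip[of "real (Suc i) * \<delta>" "real i * \<delta>"] d by (simp add: algebra_simps)
  have sd: "\<sigma> * \<delta> \<ge> \<delta>" using s d by simp
  show ?case
  proof (cases "zigzag F c0 \<sigma> \<delta> i \<le> F (real i * \<delta>)")
    case True
    thus ?thesis using Suc.IH l sd by (simp add: algebra_simps abs_le_iff)
  next
    case False
    thus ?thesis using Suc.IH l sd by (simp add: algebra_simps abs_le_iff)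
  qed
qed

definition zigzag_relu_sum :: "(real \<Rightarrow> real) \<Rightarrow> real \<Rightarrow> real \<Rightarrow> real \<Rightarrow> nat \<Rightarrow> real \<Rightarrow> real" where
  "zigzag_relu_sum F c0 \<sigma> \<delta> n x = c0
      + (\<Sum>a<n. \<sigma> / 2 * real_of_int (zigzag_coeff F c0 \<sigma> \<delta> a) * relu (x - real a * \<delta>))"

lemma zigzag_relu_sum_prefix:
  assumes d: "\<delta> > 0" and x: "real i * \<delta> \<le> x" "0 \<le> x"
  shows "c0 + (\<Sum>a<Suc i. \<sigma> / 2 * real_of_int (zigzag_coeff F c0 \<sigma> \<delta> a) * relu (x - real a * \<delta>))
       = zigzag F c0 \<sigma> \<delta> i + real_of_int (zigzag_sign F c0 \<sigma> \<delta> i) * \<sigma> * (x - real i * \<delta>)"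
  using x
proof (induction i)
  case 0 thus ?case by (simp add: zigzag_coeff_def relu_def)
next
  case (Suc i)
  have x1: "real i * \<delta> \<le> x" using Suc.prems d
    by (smt (verit, best) mult_right_mono of_nat_0_le_iff of_nat_Suc)
  have r: "relu (x - real (Suc i) * \<delta>) = x - real (Suc i) * \<delta>" using Suc.prems by (simp add: relu_def)
  have m: "real_of_int (zigzag_coeff F c0 \<sigma> \<delta> (Suc i))
      = 2 * (real_of_int (zigzag_sign F c0 \<sigma> \<delta> (Suc i)) - real_of_int (zigzag_sign F c0 \<sigma> \<delta> i))"
    by (simp add: zigzag_coeff_def)
  have "c0 + (\<Sum>a<Suc (Suc i). \<sigma> / 2 * real_of_int (zigzag_coeff F c0 \<sigma> \<delta> a) * relu (x - real a * \<delta>))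
     = (c0 + (\<Sum>a<Suc i. \<sigma> / 2 * real_of_int (zigzag_coeff F c0 \<sigma> \<delta> a) * relu (x - real a * \<delta>)))
       + \<sigma> / 2 * real_of_int (zigzag_coeff F c0 \<sigma> \<delta> (Suc i)) * relu (x - real (Suc i) * \<delta>)"
    by (simp only: sum.lessThan_Suc add.assoc)
  also have "\<dots> = zigzag F c0 \<sigma> \<delta> i + real_of_int (zigzag_sign F c0 \<sigma> \<delta> i) * \<sigma> * (x - real i * \<delta>)
       + \<sigma> / 2 * (2 * (real_of_int (zigzag_sign F c0 \<sigma> \<delta> (Suc i)) - real_of_int
           (zigzag_sign F c0 \<sigma> \<delta> i))) * (x - real (Suc i) * \<delta>)"
    by (simp only: Suc.IH[OF x1 Suc.prems(2)] m r)
  also have "\<dots> = zigzag F c0 \<sigma> \<delta> (Suc i)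
      + real_of_int (zigzag_sign F c0 \<sigma> \<delta> (Suc i)) * \<sigma> * (x - real (Suc i) * \<delta>)"
    unfolding zigzag_Suc_sign by (simp add: algebra_simps)
  finally show ?case .
qed

lemma zigzag_relu_sum_piece:
  assumes d: "\<delta> > 0" and i: "i < n" and x: "real i * \<delta> \<le> x" "x \<le> real (Suc i) * \<delta>" "0 \<le> x"
  shows "zigzag_relu_sum F c0 \<sigma> \<delta> n x = zigzag F c0 \<sigma> \<delta> i
      + real_of_int (zigzag_sign F c0 \<sigma> \<delta> i) * \<sigma> * (x - real i * \<delta>)"
proof -
  have un: "{..<n} = {..<Suc i} \<union> {Suc i..<n}" using i by auto
  have "(\<Sum>a<n. \<sigma> / 2 * real_of_int (zigzag_coeff F c0 \<sigma> \<delta> a) * relu (x - real a * \<delta>))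
      = (\<Sum>a<Suc i. \<sigma> / 2 * real_of_int (zigzag_coeff F c0 \<sigma> \<delta> a) * relu (x - real a * \<delta>))
      + (\<Sum>a\<in>{Suc i..<n}. \<sigma> / 2 * real_of_int (zigzag_coeff F c0 \<sigma> \<delta> a) * relu (x - real a * \<delta>))"
    by (subst un, rule sum.union_disjoint) auto
  moreover have "(\<Sum>a\<in>{Suc i..<n}. \<sigma> / 2 * real_of_int (zigzag_coeff F c0 \<sigma> \<delta> a) * relu
      (x - real a * \<delta>)) = 0"
  proof (rule sum.neutral, rule ballI)
    fix a assume "a \<in> {Suc i..<n}"
    hence "real (Suc i) * \<delta> \<le> real a * \<delta>" using d by (intro mult_right_mono) auto
    hence "relu (x - real a * \<delta>) = 0" using x by (simp add: relu_def)
    thus "\<sigma> / 2 * real_of_int (zigzag_coeff F c0 \<sigma> \<delta> a) * relu (x - real a * \<delta>) = 0" by simp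
  qed
  ultimately show ?thesis unfolding zigzag_relu_sum_def using zigzag_relu_sum_prefix[OF d x(1) x(3)]
      by simp
qed

lemma exists_grid_cell:
  fixes \<delta> x :: real
  assumes d: "\<delta> > 0" and n: "n \<ge> 1" and x: "0 \<le> x" "x \<le> real n * \<delta>"
  obtains i where "i < n" "real i * \<delta> \<le> x" "x \<le> real (Suc i) * \<delta>"
proof -
  define k where "k = nat \<lfloor>x / \<delta>\<rfloor>"
  have "real k \<le> x / \<delta>" "x / \<delta> < real k + 1" using x d by (simp_all add: k_def)
  hence kx: "real k * \<delta> \<le> x" and xk: "x < (real k + 1) * \<delta>" using d by (simp_all add: field_simps)
  show ?thesis
  proof (cases "k < n")
    case True thus ?thesis using that[of k] kx xk by (simp add: add.commute)
  next
    case False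
    hence "real n * \<delta> \<le> real k * \<delta>" using d by (intro mult_right_mono) auto
    hence xe: "x = real n * \<delta>" using kx x by simp
    have "real (n - 1) * \<delta> \<le> real n * \<delta>" using d n by (intro mult_right_mono) auto
    thus ?thesis using that[of "n - 1"] xe n by simp
  qed
qed

lemma zigzag_relu_sum_error:
  assumes lip: "\<And>s t. 0 \<le> s \<Longrightarrow> 0 \<le> t \<Longrightarrow> \<bar>F s - F t\<bar> \<le> \<bar>s - t\<bar>"
    and d: "\<delta> > 0" and s: "\<sigma> \<ge> 1" and c0: "\<bar>c0 - F 0\<bar> \<le> \<delta>"
    and n: "n \<ge> 1" and x: "0 \<le> x" "x \<le> real n * \<delta>"
  shows "\<bar>zigzag_relu_sum F c0 \<sigma> \<delta> n x - F x\<bar> \<le> (2 * \<sigma> + 2) * \<delta>"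
proof -
  obtain i where i: "i < n" "real i * \<delta> \<le> x" "x \<le> real (Suc i) * \<delta>"
    using exists_grid_cell[OF d n x] .
  have ap: "zigzag_relu_sum F c0 \<sigma> \<delta> n x = zigzag F c0 \<sigma> \<delta> i
      + real_of_int (zigzag_sign F c0 \<sigma> \<delta> i) * \<sigma> * (x - real i * \<delta>)"
    by (rule zigzag_relu_sum_piece[OF d i x(1)])
  have t: "\<bar>zigzag F c0 \<sigma> \<delta> i - F (real i * \<delta>)\<bar> \<le> (\<sigma> + 1) * \<delta>"
    by (rule zigzag_tracks[OF lip d s c0])
  have h: "0 \<le> x - real i * \<delta>" "x - real i * \<delta> \<le> \<delta>" using i by (auto simp: algebra_simps)
  have sgb: "\<bar>real_of_int (zigzag_sign F c0 \<sigma> \<delta> i) * \<sigma> * (x - real i * \<delta>)\<bar> \<le> \<sigma> * \<delta>"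
  proof -
    have "\<bar>real_of_int (zigzag_sign F c0 \<sigma> \<delta> i)\<bar> = 1" by (simp add: zigzag_sign_def)
    hence "\<bar>real_of_int (zigzag_sign F c0 \<sigma> \<delta> i) * \<sigma> * (x - real i * \<delta>)\<bar> = \<sigma> * (x - real i * \<delta>)"
      using s h by (simp add: abs_mult)
    also have "\<dots> \<le> \<sigma> * \<delta>" using h s by (intro mult_left_mono) auto
    finally show ?thesis .
  qed
  have l: "\<bar>F (real i * \<delta>) - F x\<bar> \<le> \<delta>"
    using lip[of "real i * \<delta>" x] h x d by simp
  show ?thesis unfolding ap using t sgb l by (simp add: algebra_simps abs_le_iff)
qed


section \<open>The approximating network\<close>

(* delta = grid_step lam L lies in [2^-(L+1), 2^-L] and, unlike 2^-L, is a finite base-lam fraction. *)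
definition grid_num :: "nat \<Rightarrow> nat \<Rightarrow> nat" where
  "grid_num lam L = lam ^ L div 2 ^ L"

definition grid_step :: "nat \<Rightarrow> nat \<Rightarrow> real" where
  "grid_step lam L = real (grid_num lam L) / real (lam ^ L)"

(* The L + 1 + 2 j trailing zero digits make this counter hold top_weight lam * 2^j * delta exactly
   in the level where the shift 2^j is applied. *)
definition shift_counter :: "nat \<Rightarrow> nat \<Rightarrow> nat \<Rightarrow> nat" where
  "shift_counter lam L j = (lam - 1) * 2 ^ j * grid_num lam L * lam ^ (L + 1 + 2 * j)"

(* The constant is stored twice: for a positive sign it enters the output with the weights
   1/lam and top_weight lam, which sum to 1. *)
definition counters :: "nat \<Rightarrow> nat \<Rightarrow> nat \<Rightarrow> nat list" where
  "counters lam L Nc = map (shift_counter lam L) [0..<Suc L] @ [Nc, Nc]"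

definition coeff_weights :: "nat \<Rightarrow> int \<Rightarrow> real list" where
  "coeff_weights lam m = (if m \<ge> 0 then concat (replicate (nat m) [1 / real lam, top_weight lam])
     else replicate (nat (- m)) (-1))"

definition copy_children :: "nat \<times> real \<Rightarrow> (bool \<times> real) list" where
  "copy_children = (\<lambda>l. [(False, 0)])"

definition split_children :: "nat \<times> real \<Rightarrow> (bool \<times> real) list" where
  "split_children = (\<lambda>l. [(False, 0), (True, 0)])"

definition coeff_children :: "nat \<Rightarrow> (nat \<Rightarrow> int) \<Rightarrow> nat \<times> real \<Rightarrow> (bool \<times> real) list" where
  "coeff_children lam M = (\<lambda>l. map (\<lambda>w. (False, w)) (coeff_weights lam (M (fst l))))"

(* The first L levels only copy the hinge, so that the counters have enough digits when the
   L + 1 doubling levels start; the last level attaches the output weights. *)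
definition branch_steps :: "nat \<Rightarrow> nat \<Rightarrow> (nat \<Rightarrow> int) \<Rightarrow> branch_step list" where
  "branch_steps lam L M = replicate L (0, 0, copy_children)
     @ map (\<lambda>j. (j, 2 ^ j, split_children)) [0..<Suc L] @ [(0, 0, coeff_children lam M)]"

definition constant_edges :: "nat \<Rightarrow> nat \<Rightarrow> bool \<Rightarrow> (nat \<times> real) list" where
  "constant_edges lam L pos =
     (if pos then [(Suc L, 1 / real lam), (Suc (Suc L), top_weight lam)] else [(Suc L, -1)])"

definition output_units :: "nat \<Rightarrow> nat \<Rightarrow> bool \<Rightarrow> (nat \<Rightarrow> int) \<Rightarrow> unit_spec list" where
  "output_units lam L pos M = (let fl = final_labels [(0, 0)] (branch_steps lam L M) in
     [(0, map (\<lambda>p. (L + 3 + p, snd (fl ! p))) [0..<length fl] @ constant_edges lam L pos)])"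

definition approx_units :: "nat \<Rightarrow> nat \<Rightarrow> nat \<Rightarrow> bool \<Rightarrow> (nat \<Rightarrow> int) \<Rightarrow> unit_spec list list" where
  "approx_units lam L Nc pos M =
     (input_units lam (counters lam L Nc) # branch_layers lam (counters lam L Nc) 1 [(0, 0)] (branch_steps lam L M))
     @ [output_units lam L pos M]"

lemma length_counters[simp]: "length (counters lam L Nc) = L + 3" by (simp add: counters_def)
lemma length_branch_steps: "length (branch_steps lam L M) = 2 * L + 2" by (simp add: branch_steps_def)

lemma nth_counters_shift: "j \<le> L \<Longrightarrow> counters lam L Nc ! j = shift_counter lam L j"
  by (simp add: counters_def nth_append)
lemma nth_counters_constant1: "counters lam L Nc ! Suc L = Nc" by (simp add: counters_def nth_append)
lemma nth_counters_constant2: "counters lam L Nc ! Suc (Suc L) = Nc"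
    by (simp add: counters_def nth_append)

lemma grid_num_le: "2 ^ L * grid_num lam L \<le> lam ^ L"
  unfolding grid_num_def by (metis div_times_less_eq_dividend mult.commute)

lemma counter_value_small: "N < lam ^ T \<Longrightarrow> counter_value lam N T = real N / real (lam ^ T)"
  by (simp add: counter_value_def)

lemma counter_value_shift_counter:
  assumes lam: "lam \<ge> 2" and j: "j \<le> L"
  shows "counter_value lam (shift_counter lam L j) (Suc (1 + 2 * (L + j)))
      = top_weight lam * real (2 ^ j) * grid_step lam L"
proof -
  let ?A = "lam ^ (L + 1 + 2 * j)"
  have T: "lam ^ (Suc (1 + 2 * (L + j))) = ?A * lam ^ (L + 1)"
    by (simp add: power_add[symmetric] algebra_simps)
  have "2 ^ j * grid_num lam L \<le> 2 ^ L * grid_num lam L" using j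
      by (intro mult_right_mono) (auto intro: power_increasing)
  hence b: "2 ^ j * grid_num lam L \<le> lam ^ L" using grid_num_le[of L lam] by linarith
  have "(lam - 1) * (2 ^ j * grid_num lam L) \<le> (lam - 1) * lam ^ L" using b by (rule mult_left_mono) simp
  also have "\<dots> < lam * lam ^ L" using lam by simp
  finally have c: "(lam - 1) * 2 ^ j * grid_num lam L < lam ^ (L + 1)" by (simp add: mult.assoc)
  have Apos: "?A > 0" using lam by simp
  have "shift_counter lam L j < lam ^ (Suc (1 + 2 * (L + j)))"
    unfolding T shift_counter_def using c Apos by (simp add: mult.commute)
  hence "counter_value lam (shift_counter lam L j) (Suc (1 + 2 * (L + j)))
      = real (shift_counter lam L j) / real (?A * lam ^ (L + 1))"
    using counter_value_small T by metis
  also have "\<dots> = real ((lam - 1) * 2 ^ j * grid_num lam L) / real (lam ^ (L + 1))"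
    using Apos by (simp add: shift_counter_def)
  also have "\<dots> = top_weight lam * real (2 ^ j) * grid_step lam L"
    using lam by (simp add: top_weight_def grid_step_def of_nat_diff field_simps)
  finally show ?thesis .
qed

lemma branch_steps_ok:
  assumes lam: "lam \<ge> 2"
  shows "\<forall>i<length (branch_steps lam L M). branch_step_ok lam (counters lam L Nc) (grid_step lam L)
      (1 + 2 * i) (branch_steps lam L M ! i)"
proof (intro allI impI)
  fix i assume i: "i < length (branch_steps lam L M)"
  show "branch_step_ok lam (counters lam L Nc) (grid_step lam L) (1 + 2 * i) (branch_steps lam L M ! i)"
  proof (cases "i < L")
    case True
    hence "branch_steps lam L M ! i = (0, 0, copy_children)" by (simp add: branch_steps_def nth_append)
    thus ?thesis by (simp add: branch_step_ok_def copy_children_def)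
  next
    case False
    show ?thesis
    proof (cases "i < L + Suc L")
      case True
      define j where "j = i - L"
      have j: "j \<le> L" "i = L + j" using True False by (auto simp: j_def)
      hence "branch_steps lam L M ! i = (j, 2 ^ j, split_children)"
          by (simp add: branch_steps_def nth_append)
      moreover have "counter_value lam (counters lam L Nc ! j) (Suc (1 + 2 * i))
          = top_weight lam * real (2 ^ j) * grid_step lam L"
        using counter_value_shift_counter[OF lam j(1)] j by (simp add: nth_counters_shift)
      ultimately show ?thesis using j by (simp add: branch_step_ok_def split_children_def)
    next
      case False2: False
      hence "i = L + Suc L" using i by (simp add: length_branch_steps)
      hence "branch_steps lam L M ! i = (0, 0, coeff_children lam M)"
          by (simp add: branch_steps_def nth_append)
      thus ?thesis by (simp add: branch_step_ok_def coeff_children_def)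
    qed
  qed
qed


lemma branch_labels_copy: "branch_labels s copy_children [(0, 0)] = [(0, 0)]"
  by (simp add: branch_labels_def copy_children_def)

lemma final_labels_copy: "final_labels [(0, 0)] (replicate k (0, 0, copy_children)) = [(0, 0)]"
  by (induction k) (simp_all add: branch_labels_copy)

lemma branch_labels_split: "branch_labels s split_children labels
    = concat (map (\<lambda>l. [(fst l, 0), (fst l + s, 0)]) labels)"
proof -
  have "branch_labels s split_children labels
      = concat (map (\<lambda>p. [(fst (labels ! p), 0), (fst (labels ! p) + s, 0)]) [0..<length labels])"
    by (simp add: branch_labels_def split_children_def)
  also have "\<dots> = concat
      (map ((\<lambda>l. [(fst l, 0), (fst l + s, 0)]) \<circ> (\<lambda>p. labels ! p)) [0..<length labels])"
    by (simp add: o_def)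
  also have "\<dots> = concat (map (\<lambda>l. [(fst l, 0), (fst l + s, 0)]) labels)"
    by (metis map_map map_nth)
  finally show ?thesis .
qed

lemma sum_list_concat: "sum_list (concat xss) = sum_list (map sum_list (xss :: real list list))"
  by (induction xss) auto

lemma mset_concat_pairs: "mset (concat (map (\<lambda>a. [a, a + s]) xs)) = mset xs + mset (map (\<lambda>a. a + s) xs)"
  by (induction xs) (auto simp: add_ac)

definition split_labels :: "nat \<Rightarrow> (nat \<times> real) list" where
  "split_labels k = final_labels [(0, 0)] (map (\<lambda>j. (j, 2 ^ j, split_children)) [0..<k])"

lemma split_labels_Suc: "split_labels (Suc k) = branch_labels (2 ^ k) split_children (split_labels k)"
  by (simp add: split_labels_def final_labels_append)

lemma split_labels_props:
  "mset (map fst (split_labels k)) = mset [0..<2 ^ k] \<and> length (split_labels k) = 2 ^ k"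
proof (induction k)
  case 0 thus ?case by (simp add: split_labels_def)
next
  case (Suc k)
  have m: "map fst (split_labels (Suc k)) = concat (map (\<lambda>a. [a, a + 2 ^ k]) (map fst (split_labels k)))"
    unfolding split_labels_Suc branch_labels_split by (simp add: map_concat o_def)
  have "mset (map fst (split_labels (Suc k))) = mset (map fst (split_labels k))
      + mset (map (\<lambda>a. a + 2 ^ k) (map fst (split_labels k)))"
    unfolding m mset_concat_pairs ..
  also have "\<dots> = mset [0..<2 ^ k] + image_mset (\<lambda>a. a + 2 ^ k) (mset [0..<2 ^ k])"
    using Suc.IH mset_map[of "\<lambda>a. a + 2 ^ k" "map fst (split_labels k)"] by simp
  also have "\<dots> = mset ([0..<2 ^ k] @ map (\<lambda>a. a + 2 ^ k) [0..<2 ^ k])" by (simp add: mset_map)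
  also have "[0..<2 ^ k] @ map (\<lambda>a. a + 2 ^ k) [0..<2 ^ k] = [0..<2 ^ Suc k]"
  proof -
    have "map (\<lambda>a. a + 2 ^ k) [0..<2 ^ k] = [2 ^ k..<2 ^ k + 2 ^ k]"
      by (metis add.commute add_0 map_add_upt)
    thus ?thesis by (simp add: upt_add_eq_append[symmetric] mult_2)
  qed
  finally have "mset (map fst (split_labels (Suc k))) = mset [0..<2 ^ Suc k]" .
  moreover have "length (split_labels (Suc k)) = 2 ^ Suc k"
    unfolding split_labels_Suc branch_labels_split using Suc.IH
    by (simp add: length_concat o_def sum_list_triv)
  ultimately show ?case by simp
qed

lemma coeff_labels_eq: "final_labels [(0, 0)] (branch_steps lam L M)
    = branch_labels 0 (coeff_children lam M) (split_labels (Suc L))"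
  by (simp add: branch_steps_def final_labels_append final_labels_copy split_labels_def)

lemma sum_list_concat_replicate: "sum_list (concat (replicate k xs))
    = real k * sum_list (xs :: real list)"
  by (induction k) (auto simp: algebra_simps)

lemma sum_coeff_weights: "lam \<ge> 2 \<Longrightarrow> sum_list (coeff_weights lam m) = real_of_int m"
  by (auto simp: coeff_weights_def sum_list_concat_replicate sum_list_replicate top_weight_def
      of_nat_diff field_simps)

lemma length_coeff_weights: "\<bar>m\<bar> \<le> 4 \<Longrightarrow> length (coeff_weights lam m) \<le> 8"
  by (auto simp: coeff_weights_def length_concat sum_list_triv o_def sum_list_replicate)

lemma quant_weights_basic:
  assumes lam: "lam \<ge> 2"
  shows "-1 \<in> quant_weights lam" "1 / real lam \<in> quant_weights lam" "top_weight lam \<in> quant_weights lam"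
    "\<And>k. 1 \<le> k \<Longrightarrow> k < lam \<Longrightarrow> real k / real lam \<in> quant_weights lam"
proof -
  show "-1 \<in> quant_weights lam" by (simp add: quant_weights_def)
  show "1 / real lam \<in> quant_weights lam" using lam unfolding quant_weights_def
    by (auto intro!: exI[of _ 1])
  show "top_weight lam \<in> quant_weights lam" using lam unfolding quant_weights_def top_weight_def
    by (auto intro!: exI[of _ "lam - 1"])
  fix k :: nat assume "1 \<le> k" "k < lam"
  thus "real k / real lam \<in> quant_weights lam" unfolding quant_weights_def by auto
qed

lemma coeff_weights_in: "lam \<ge> 2 \<Longrightarrow> w \<in> set (coeff_weights lam m) \<Longrightarrow> w \<in> quant_weights lam"
  using quant_weights_basic by (auto simp: coeff_weights_def split: if_splits)

lemma sum_list_map_mset_eq: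
  "mset xs = mset ys \<Longrightarrow> sum_list (map g xs) = sum_list (map (g :: nat \<Rightarrow> real) ys)"
  by (metis mset_map sum_mset_sum_list)

lemma sum_coeff_labels:
  assumes lam: "lam \<ge> 2"
  shows "sum_list (map (\<lambda>l. snd l * hinge_value lam x \<delta> l)
      (branch_labels 0 (coeff_children lam M) (split_labels (Suc L))))
    = (\<Sum>a<2 ^ Suc L. real_of_int (M a) * top_weight lam * relu (x - real a * \<delta>))"
proof -
  let ?LS = "split_labels (Suc L)"
  have mapeq: "map
      (\<lambda>p. real_of_int (M (fst (?LS ! p))) * top_weight lam * relu (x - real (fst (?LS ! p)) * \<delta>))
      [0..<length ?LS]
      = map (\<lambda>a. real_of_int (M a) * top_weight lam * relu (x - real a * \<delta>)) (map fst ?LS)"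
    by (rule nth_equalityI) simp_all
  have "branch_labels 0 (coeff_children lam M) ?LS
      = concat (map (\<lambda>p. map (\<lambda>w. (fst (?LS ! p), w)) (coeff_weights lam (M (fst (?LS ! p)))))
      [0..<length ?LS])"
    by (simp add: branch_labels_def coeff_children_def o_def)
  hence "sum_list (map (\<lambda>l. snd l * hinge_value lam x \<delta> l) (branch_labels 0 (coeff_children lam M) ?LS))
     = sum_list (map (\<lambda>p. sum_list
         (map (\<lambda>w. w * (top_weight lam * relu (x - real (fst (?LS ! p)) * \<delta>)))
         (coeff_weights lam (M (fst (?LS ! p)))))) [0..<length ?LS])"
    by (simp add: map_concat sum_list_concat o_def hinge_value_def)
  also have "\<dots> = sum_list
      (map (\<lambda>p. real_of_int (M (fst (?LS ! p))) * top_weight lam * relu (x - real (fst (?LS ! p)) * \<delta>))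
      [0..<length ?LS])"
  proof (rule arg_cong[of _ _ sum_list], rule map_cong[OF refl])
    fix p
    show "sum_list (map (\<lambda>w. w * (top_weight lam * relu (x - real (fst (?LS ! p)) * \<delta>)))
        (coeff_weights lam (M (fst (?LS ! p)))))
      = real_of_int (M (fst (?LS ! p))) * top_weight lam * relu (x - real (fst (?LS ! p)) * \<delta>)"
      unfolding sum_list_mult_const map_ident sum_coeff_weights[OF lam] by (simp only: mult.assoc)
  qed
  also have "\<dots> = sum_list
      (map (\<lambda>a. real_of_int (M a) * top_weight lam * relu (x - real a * \<delta>)) (map fst ?LS))"
    using mapeq by simp
  also have "\<dots> = sum_list
      (map (\<lambda>a. real_of_int (M a) * top_weight lam * relu (x - real a * \<delta>)) [0..<2 ^ Suc L])"
    by (rule sum_list_map_mset_eq) (use split_labels_props in blast)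
  also have "\<dots> = (\<Sum>a<2 ^ Suc L. real_of_int (M a) * top_weight lam * relu (x - real a * \<delta>))"
    by (simp add: sum_list_distinct_conv_sum_set atLeast0LessThan)
  finally show ?thesis .
qed


abbreviation "coeff_labels lam L M \<equiv> final_labels [(0, 0)] (branch_steps lam L M)"

lemma branch_steps_counter_index: "\<forall>i<length (branch_steps lam L M). fst (branch_steps lam L M ! i) < L
    + 3"
proof (intro allI impI)
  fix i assume i: "i < length (branch_steps lam L M)"
  show "fst (branch_steps lam L M ! i) < L + 3"
  proof (cases "i < L")
    case True thus ?thesis by (simp add: branch_steps_def nth_append)
  next
    case False
    show ?thesis
    proof (cases "i < L + Suc L")
      case True thus ?thesis using False by (simp add: branch_steps_def nth_append)
    next
      case False2: False
      hence "i = L + Suc L" using i by (simp add: length_branch_steps)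
      thus ?thesis by (simp add: branch_steps_def nth_append)
    qed
  qed
qed

lemma approx_units_wf: "units_wf 1 (approx_units lam L Nc pos M)"
proof -
  have o: "units_wf (L + 3 + length (coeff_labels lam L M)) [output_units lam L pos M]"
    by (auto simp: output_units_def Let_def constant_edges_def)
  have b: "units_wf (length (counters lam L Nc) + length [(0::nat, 0::real)])
      (branch_layers lam (counters lam L Nc) 1 [(0, 0)] (branch_steps lam L M)
      @ [output_units lam L pos M])"
    by (rule units_wf_branch_layers) (use branch_steps_counter_index o in auto)
  have l1: "\<forall>u\<in>set (input_units lam (counters lam L Nc)). \<forall>e\<in>set (snd u). fst e < 1"
    by (auto simp: input_units_def counter_units_def)
  have "length (input_units lam (counters lam L Nc)) = length (counters lam L Nc)
      + length [(0::nat, 0::real)]"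
    by (simp add: input_units_def)
  thus ?thesis using b l1 by (simp add: approx_units_def)
qed

lemma approx_units_not_Nil: "approx_units lam L Nc pos M \<noteq> []" by (simp add: approx_units_def)
lemma length_last_approx_units: "length (last (approx_units lam L Nc pos M)) = 1"
    by (simp add: approx_units_def output_units_def Let_def)
lemma length_approx_units: "length (approx_units lam L Nc pos M) = 4 * L + 6"
  by (simp add: approx_units_def length_branch_layers length_branch_steps)

lemma unit_input_append: "unit_input v (b, es1 @ es2) = unit_input v (b, es1)
    + sum_list (map (\<lambda>e. snd e * v ! fst e) es2)"
  by (simp add: unit_input_def)

lemma hidden_eval_approx_units:
  assumes lam: "lam \<ge> 2" and x: "0 \<le> x" "x \<le> 1"
  shows "hidden_eval [x]
      (input_units lam (counters lam L Nc) # branch_layers lam (counters lam L Nc) 1 [(0, 0)]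
      (branch_steps lam L M))
       = level_state lam (counters lam L Nc) x (grid_step lam L) (4 * L + 5) (coeff_labels lam L M)"
proof -
  let ?Ns = "counters lam L Nc"
  let ?ds = "branch_steps lam L M"
  have "hidden_eval [x] (input_units lam ?Ns # branch_layers lam ?Ns 1 [(0, 0)] ?ds)
      = hidden_eval (level_state lam ?Ns x (grid_step lam L) 1 [(0, 0)])
          (branch_layers lam ?Ns 1 [(0, 0)] ?ds)"
    using relu_units_input_units[OF lam x] by (simp add: hidden_eval_Cons)
  also have "\<dots> = level_state lam ?Ns x (grid_step lam L) (1 + 2 * length ?ds) (coeff_labels lam L M)"
    by (rule hidden_eval_branch_layers[OF lam x])
        (use branch_steps_ok[OF lam] in \<open>auto simp: grid_step_def\<close>)
  also have "1 + 2 * length ?ds = 4 * L + 5" by (simp add: length_branch_steps)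
  finally show ?thesis .
qed

lemma inverse_add_top_weight: "lam > 0 \<Longrightarrow> 1 / real lam + top_weight lam = 1"
  by (simp add: top_weight_def of_nat_diff field_simps)

lemma constant_edges_input:
  assumes lam: "lam \<ge> 2" and v: "v ! Suc L = c" "v ! Suc (Suc L) = c"
  shows "sum_list (map (\<lambda>e. snd e * v ! fst e) (constant_edges lam L pos)) = (if pos then 1 else -1) * c"
proof (cases pos)
  case True
  have "1 / real lam * c + top_weight lam * c = c"
    using inverse_add_top_weight[of lam] lam by (metis distrib_right mult_1 not_numeral_le_zero not_gr0)
  thus ?thesis using True v by (simp add: constant_edges_def)
next
  case False thus ?thesis using v by (simp add: constant_edges_def)
qed

lemma realize_approx_net:
  assumes lam: "lam \<ge> 2" and x: "0 \<le> x" "x \<le> 1"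
  shows "realize (net_of_units 1 (approx_units lam L Nc pos M)) x =
     (if pos then 1 else -1) * counter_value lam Nc (4 * L + 5)
     + (\<Sum>a<2 ^ Suc L. real_of_int (M a) * top_weight lam * relu (x - real a * grid_step lam L))"
proof -
  let ?Ns = "counters lam L Nc"
  let ?fl = "coeff_labels lam L M"
  let ?\<delta> = "grid_step lam L"
  let ?v = "level_state lam ?Ns x ?\<delta> (4 * L + 5) ?fl"
  have "realize (net_of_units 1 (approx_units lam L Nc pos M)) x
      = vec_of_list (units_eval [x] (approx_units lam L Nc pos M)) 0"
    by (rule realize_net_of_units[OF approx_units_wf approx_units_not_Nil])
  also have "units_eval [x] (approx_units lam L Nc pos M) = affine_units ?v (output_units lam L pos M)"
    unfolding approx_units_def units_eval_snoc hidden_eval_approx_units[OF lam x] ..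
  finally have val: "realize (net_of_units 1 (approx_units lam L Nc pos M)) x
     = unit_input ?v (0, map (\<lambda>p. (L + 3 + p, snd (?fl ! p))) [0..<length ?fl]
         @ constant_edges lam L pos)"
    by (simp add: vec_of_list_def affine_units_def output_units_def Let_def)
  have "map (\<lambda>e. snd e * ?v ! fst e) (map (\<lambda>p. (L + 3 + p, snd (?fl ! p))) [0..<length ?fl])
      = map (\<lambda>l. snd l * hinge_value lam x ?\<delta> l) ?fl"
    using nth_level_state_hinge[of _ ?fl lam ?Ns x ?\<delta> "4 * L + 5"] by (intro nth_equalityI) simp_all
  hence "unit_input ?v (0, map (\<lambda>p. (L + 3 + p, snd (?fl ! p))) [0..<length ?fl])
      = sum_list (map (\<lambda>l. snd l * hinge_value lam x ?\<delta> l) ?fl)"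
    by (simp add: unit_input_def)
  also have "\<dots> = (\<Sum>a<2 ^ Suc L. real_of_int (M a) * top_weight lam * relu (x - real a * ?\<delta>))"
    unfolding coeff_labels_eq by (rule sum_coeff_labels[OF lam])
  finally have hinges: "unit_input ?v (0, map (\<lambda>p. (L + 3 + p, snd (?fl ! p))) [0..<length ?fl])
      = (\<Sum>a<2 ^ Suc L. real_of_int (M a) * top_weight lam * relu (x - real a * ?\<delta>))" .
  have "sum_list (map (\<lambda>e. snd e * ?v ! fst e) (constant_edges lam L pos))
      = (if pos then 1 else -1) * counter_value lam Nc (4 * L + 5)"
    using nth_level_state_counter[of "Suc L" ?Ns] nth_level_state_counter[of "Suc (Suc L)" ?Ns]
    by (intro constant_edges_input[OF lam]) (simp_all add: nth_counters_constant1 nth_counters_constant2)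
  thus ?thesis unfolding val unit_input_append hinges by simp
qed


lemma counter_units_weights_in: "lam \<ge> 2 \<Longrightarrow> u \<in> set (counter_units lam Ns t)
    \<Longrightarrow> unit_weights_in (quant_weights lam) u"
proof -
  assume lam: "lam \<ge> 2" and u: "u \<in> set (counter_units lam Ns t)"
  then obtain h where h: "u
      = (real (digit lam (Ns ! h) (t - 1)) / real lam, if t = Suc 0 then [] else [(h, 1 / real lam)])"
    by (auto simp: counter_units_def)
  have "digit lam (Ns ! h) (t - 1) < lam" using lam by (simp add: digit_def)
  hence "real (digit lam (Ns ! h) (t - 1)) / real lam \<noteq> 0
      \<longrightarrow> real (digit lam (Ns ! h) (t - 1)) / real lam \<in> quant_weights lam"
    using quant_weights_basic(4)[OF lam, of "digit lam (Ns ! h) (t - 1)"] by auto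
  thus ?thesis using h quant_weights_basic[OF lam] by (auto simp: unit_weights_in_def)
qed

lemma complement_units_weights_in:
  assumes lam: "lam \<ge> 2" and u: "u \<in> set (complement_units lam Ns labels t)"
  shows "unit_weights_in (quant_weights lam) u"
  using u counter_units_weights_in[OF lam, of u Ns "Suc t"] quant_weights_basic[OF lam]
  by (auto simp: complement_units_def unit_weights_in_def)

lemma branch_units_weights_in:
  assumes lam: "lam \<ge> 2" and c: "c < length Ns" and u: "u \<in> set (branch_units lam Ns c ch labels t)"
  shows "unit_weights_in (quant_weights lam) u"
  using u c counter_units_weights_in[OF lam, of u Ns "Suc (Suc t)"] quant_weights_basic[OF lam]
  by (auto simp: branch_units_def unit_weights_in_def split: if_splits)

lemma branch_layers_weights_in:
  assumes lam: "lam \<ge> 2" and c: "\<forall>i<length ds. fst (ds ! i) < length Ns"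
    and us: "us \<in> set (branch_layers lam Ns t labels ds)" and u: "u \<in> set us"
  shows "unit_weights_in (quant_weights lam) u"
  using c us
proof (induction ds arbitrary: t labels)
  case (Cons d ds)
  obtain c s ch where d: "d = (c, s, ch)" by (cases d)
  have "c < length Ns" using Cons.prems(1) d by force
  moreover have "\<forall>i<length ds. fst (ds ! i) < length Ns" using Cons.prems(1) by auto
  ultimately show ?case
    using Cons.IH Cons.prems(2) d u
    by (auto intro: complement_units_weights_in[OF lam] branch_units_weights_in[OF lam])
qed simp


lemma coeff_labels_weights_in: "lam \<ge> 2 \<Longrightarrow> l \<in> set (coeff_labels lam L M) \<Longrightarrow> snd l \<in> quant_weights lam"
  unfolding coeff_labels_eq by (auto simp: branch_labels_def coeff_children_def intro: coeff_weights_in)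

lemma approx_net_weights_in:
  assumes lam: "lam \<ge> 2"
  shows "weights_in (quant_weights lam) (net_of_units 1 (approx_units lam L Nc pos M))"
proof (rule weights_in_net_of_units)
  have l1: "\<forall>u\<in>set (input_units lam (counters lam L Nc)). unit_weights_in (quant_weights lam) u"
    using counter_units_weights_in[OF lam] quant_weights_basic[OF lam]
    by (auto simp: input_units_def unit_weights_in_def)
  have b: "\<forall>us\<in>set (branch_layers lam (counters lam L Nc) 1 [(0, 0)] (branch_steps lam L M)). \<forall>u\<in>set
      us. unit_weights_in (quant_weights lam) u"
    using branch_steps_counter_index[of lam L M]
      branch_layers_weights_in[OF lam, of "branch_steps lam L M" "counters lam L Nc"] by simp
  have o: "\<forall>u\<in>set (output_units lam L pos M). unit_weights_in (quant_weights lam) u"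
  proof -
    let ?fl = "coeff_labels lam L M"
    have d: "distinct
        (map fst (map (\<lambda>p. (L + 3 + p, snd (?fl ! p))) [0..<length ?fl] @ constant_edges lam L pos))"
      by (auto simp: constant_edges_def distinct_map inj_on_def)
    have w: "\<forall>e\<in>set (map (\<lambda>p. (L + 3 + p, snd (?fl ! p))) [0..<length ?fl] @ constant_edges lam L pos).
        snd e \<in> quant_weights lam"
      using quant_weights_basic[OF lam]
          by (auto simp: constant_edges_def intro!: coeff_labels_weights_in[OF lam] nth_mem)
    show ?thesis using d w by (simp add: output_units_def Let_def unit_weights_in_def)
  qed
  show "\<forall>us\<in>set (approx_units lam L Nc pos M). \<forall>u\<in>set us. unit_weights_in (quant_weights lam) u"
    using l1 b o by (auto simp: approx_units_def)
qed

lemma branch_cost_copy: "branch_cost H [(0, 0)] (replicate k (0, 0, copy_children)) = k * (5 * H + 5)"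
  by (induction k) (simp_all add: branch_labels_copy)

lemma branch_cost_split: "branch_cost H [(0, 0)] (map (\<lambda>j. (j, 2 ^ j, split_children)) [0..<k])
    \<le> 5 * H * k + 8 * 2 ^ k"
proof (induction k)
  case 0 thus ?case by simp
next
  case (Suc k)
  have ln: "length (branch_labels (2 ^ k) split_children (split_labels k)) = 2 * 2 ^ k"
    using split_labels_props[of "Suc k"] by (simp add: split_labels_Suc)
  have "branch_cost H [(0, 0)] (map (\<lambda>j. (j, 2 ^ j, split_children)) [0..<Suc k])
     = branch_cost H [(0, 0)] (map (\<lambda>j. (j, 2 ^ j, split_children)) [0..<k])
         + branch_cost H (split_labels k) [(k, 2 ^ k, split_children)]"
    by (simp add: branch_cost_append split_labels_def)
  also have "branch_cost H (split_labels k) [(k, 2 ^ k, split_children)] = 5 * H + 2 * 2 ^ k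
      + 3 * (2 * 2 ^ k)"
    using ln split_labels_props[of k] by simp
  finally show ?case using Suc.IH by simp
qed

lemma sum_list_map_le: "(\<forall>x\<in>set xs. f x \<le> (k::nat)) \<Longrightarrow> sum_list (map f xs) \<le> k * length xs"
  by (induction xs) auto

lemma length_coeff_labels:
  assumes M: "\<forall>a. \<bar>M a\<bar> \<le> 4"
  shows "length (coeff_labels lam L M) \<le> 8 * 2 ^ Suc L"
proof -
  have "length (branch_labels 0 (coeff_children lam M) (split_labels (Suc L)))
      = sum_list (map (\<lambda>p. length (coeff_children lam M (split_labels (Suc L) ! p)))
      [0..<length (split_labels (Suc L))])"
    by (rule length_branch_labels)
  also have "\<dots> \<le> 8 * length [0..<length (split_labels (Suc L))]"
    by (rule sum_list_map_le) (use M length_coeff_weights in \<open>auto simp: coeff_children_def\<close>)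
  finally show ?thesis unfolding coeff_labels_eq using split_labels_props[of "Suc L"] by simp
qed

lemma units_cost_approx_branch_layers:
  assumes M: "\<forall>a. \<bar>M a\<bar> \<le> 4"
  shows "sum_list (map units_cost
      (branch_layers lam (counters lam L Nc) 1 [(0, 0)] (branch_steps lam L M))) \<le>
      L * (5 * (L + 3) + 5) + (5 * (L + 3) * Suc L + 8 * 2 ^ Suc L)
          + (5 * (L + 3) + 2 * 2 ^ Suc L + 3 * (8 * 2 ^ Suc L))"
proof -
  have "sum_list (map units_cost
      (branch_layers lam (counters lam L Nc) 1 [(0, 0)] (branch_steps lam L M)))
      \<le> branch_cost (L + 3) [(0, 0)] (branch_steps lam L M)"
    using units_cost_branch_layers[of lam "counters lam L Nc" 1 "[(0, 0)]" "branch_steps lam L M"]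
    by simp
  also have "\<dots> = branch_cost (L + 3) [(0, 0)] (replicate L (0, 0, copy_children))
      + branch_cost (L + 3) [(0, 0)] (map (\<lambda>j. (j, 2 ^ j, split_children)) [0..<Suc L])
      + branch_cost (L + 3) (split_labels (Suc L)) [(0, 0, coeff_children lam M)]"
    by (simp add: branch_steps_def branch_cost_append final_labels_copy split_labels_def
        final_labels_append)
  also have "branch_cost (L + 3) (split_labels (Suc L)) [(0, 0, coeff_children lam M)] = 5 * (L + 3)
      + 2 * length (split_labels (Suc L)) + 3 * length (coeff_labels lam L M)"
    by (simp add: coeff_labels_eq)
  finally show ?thesis
      using branch_cost_copy[of "L + 3" L] branch_cost_split[of "L + 3" "Suc L"]
      length_coeff_labels[OF M, of lam L] split_labels_props[of "Suc L"]
    by linarith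
qed

lemma square_le_exp: "(L + 3) ^ 2 \<le> 16 * 2 ^ (L::nat)"
proof (induction L)
  case 0 thus ?case by simp
next
  case (Suc L)
  have "(Suc L + 3) ^ 2 = (L + 3) ^ 2 + 2 * L + 7" by (simp add: power2_eq_square algebra_simps)
  also have "\<dots> \<le> 2 * (L + 3) ^ 2"
  proof -
    have "3 * (L + 3) \<le> (L + 3) * (L + 3)" by (rule mult_right_mono) auto
    thus ?thesis by (simp add: power2_eq_square)
  qed
  also have "\<dots> \<le> 16 * 2 ^ Suc L" using Suc.IH by simp
  finally show ?case .
qed

lemma num_weights_approx_net:
  assumes M: "\<forall>a. \<bar>M a\<bar> \<le> 4"
  shows "num_weights (net_of_units 1 (approx_units lam L Nc pos M)) \<le> 244 * 2 ^ L"
proof -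
  let ?Ns = "counters lam L Nc"
  let ?H = "L + 3"
  have c1: "units_cost (input_units lam ?Ns) \<le> 2 * (L + 4)"
  proof -
    have "\<forall>u\<in>set (input_units lam ?Ns). unit_cost u \<le> 2"
      by (auto simp: input_units_def counter_units_def unit_cost_def)
    hence "units_cost (input_units lam ?Ns) \<le> 2 * length (input_units lam ?Ns)" by (rule units_cost_le)
    thus ?thesis by (simp add: input_units_def)
  qed
  note c2 = units_cost_approx_branch_layers[OF M, of lam L Nc]
  have c3: "units_cost (output_units lam L pos M) \<le> 8 * 2 ^ Suc L + 2"
  proof -
    have "units_cost (output_units lam L pos M) = length (coeff_labels lam L M)
        + length (constant_edges lam L pos)"
      by (simp add: output_units_def Let_def units_cost_def unit_cost_def)
    moreover have "length (constant_edges lam L pos) \<le> 2" by (simp add: constant_edges_def)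
    ultimately show ?thesis using length_coeff_labels[OF M, of lam L] by linarith
  qed
  have "num_weights (net_of_units 1 (approx_units lam L Nc pos M))
      \<le> sum_list (map units_cost (approx_units lam L Nc pos M))"
    by (rule num_weights_net_of_units)
  also have "\<dots> = units_cost (input_units lam ?Ns)
      + sum_list (map units_cost (branch_layers lam ?Ns 1 [(0, 0)] (branch_steps lam L M)))
      + units_cost (output_units lam L pos M)"
    by (simp add: approx_units_def)
  also have "\<dots> \<le> 10 * (L + 3) ^ 2 + 84 * 2 ^ L"
    using c1 c2 c3 by (simp add: power2_eq_square algebra_simps)
  also have "\<dots> \<le> 244 * 2 ^ L"
    using square_le_exp[of L] by simp
  finally show ?thesis .
qed


section \<open>Accuracy and size of the network\<close>

lemma exists_dyadic_scale:
  fixes \<epsilon> :: real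
  assumes e: "0 < \<epsilon>" "\<epsilon> < 1"
  obtains L :: nat where "6 / \<epsilon> \<le> real (2 ^ L)" "real (2 ^ L) < 12 / \<epsilon>" "real L \<le> log 2 (1 / \<epsilon>) + 4"
proof -
  define y where "y = log 2 (6 / \<epsilon>)"
  have y6: "6 / \<epsilon> > 1" using e by (simp add: field_simps)
  have ypos: "y > 0" using y6 e by (simp add: y_def)
  define L where "L = nat \<lceil>y\<rceil>"
  have L1: "real L \<ge> y" using ypos by (simp add: L_def)
  have L2: "real L < y + 1" using ypos by (simp add: L_def) linarith
  have p: "real (2 ^ L) = 2 powr real L" by (simp add: powr_realpow)
  have "2 powr y = 6 / \<epsilon>" using y6 e by (simp add: y_def)
  moreover have "2 powr y \<le> 2 powr real L" using L1 by simp
  ultimately have a: "6 / \<epsilon> \<le> real (2 ^ L)" using p by simp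
  have "2 powr real L < 2 powr (y + 1)" using L2 by simp
  also have "2 powr (y + 1) = 12 / \<epsilon>" using y6 e by (simp add: y_def powr_add)
  finally have b: "real (2 ^ L) < 12 / \<epsilon>" using p by simp
  have "6 / \<epsilon> = 6 * (1 / \<epsilon>)" by simp
  hence "y = log 2 6 + log 2 (1 / \<epsilon>)" using e log_mult_pos[of 6 "1 / \<epsilon>" 2] unfolding y_def by simp
  moreover have "log 2 6 \<le> 3"
  proof -
    have "log 2 6 \<le> log 2 8" by simp
    also have "log 2 8 = 3"
    proof -
      have "log 2 ((2::real) ^ 3) = real 3" by (rule log_pow_cancel) auto
      thus ?thesis by simp
    qed
    finally show ?thesis .
  qed
  ultimately have c: "real L \<le> log 2 (1 / \<epsilon>) + 4" using L2 by linarith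
  show ?thesis using that a b c by blast
qed

lemma grid_step_bounds:
  assumes lam: "lam \<ge> 2"
  shows "grid_step lam L > 0" "grid_step lam L
      \<le> 1 / real (2 ^ L)" "real (2 ^ Suc L) * grid_step lam L \<ge> 1"
proof -
  let ?q = "grid_num lam L"
  have le: "2 ^ L \<le> lam ^ L" using lam by (intro power_mono) auto
  have q1: "?q \<ge> 1"
  proof -
    have "2 ^ L div 2 ^ L \<le> lam ^ L div 2 ^ L" using le by (rule div_le_mono)
    thus ?thesis by (simp add: grid_num_def)
  qed
  have qle: "2 ^ L * ?q \<le> lam ^ L" by (rule grid_num_le)
  have "lam ^ L = ?q * 2 ^ L + lam ^ L mod 2 ^ L" by (metis grid_num_def div_mult_mod_eq)
  moreover have "lam ^ L mod 2 ^ L < 2 ^ L" by simp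
  ultimately have "lam ^ L < ?q * 2 ^ L + 2 ^ L" by linarith
  also have "\<dots> \<le> 2 ^ Suc L * ?q" using q1 by (simp add: algebra_simps)
  finally have lt: "lam ^ L < 2 ^ Suc L * ?q" .
  have Lp: "real (lam ^ L) > 0" using lam by simp
  show "grid_step lam L > 0" using q1 Lp by (simp add: grid_step_def)
  have "real (2 ^ L) * real ?q \<le> real (lam ^ L)" using qle by (metis of_nat_le_iff of_nat_mult)
  thus "grid_step lam L \<le> 1 / real (2 ^ L)" using Lp by (simp add: grid_step_def field_simps)
  have "real (lam ^ L) \<le> real (2 ^ Suc L) * real ?q" using lt
      by (metis less_imp_le of_nat_le_iff of_nat_mult)
  thus "real (2 ^ Suc L) * grid_step lam L \<ge> 1" using Lp by (simp add: grid_step_def field_simps)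
qed

lemma inverse_power_le_grid_step:
  assumes lam: "lam \<ge> 2"
  shows "1 / real (lam ^ (4 * L + 5)) \<le> grid_step lam L"
proof -
  have "(2::nat) ^ Suc L \<le> 2 ^ (4 * L + 5)" by (rule power_increasing) auto
  also have "\<dots> \<le> lam ^ (4 * L + 5)" using lam by (intro power_mono) auto
  finally have "real (2 ^ Suc L) \<le> real (lam ^ (4 * L + 5))" by (simp only: of_nat_le_iff)
  hence "1 / real (lam ^ (4 * L + 5)) \<le> 1 / real (2 ^ Suc L)"
    using lam by (intro divide_left_mono) auto
  also have "\<dots> \<le> grid_step lam L" using grid_step_bounds(3)[OF lam, of L] by (simp add: field_simps)
  finally show ?thesis .
qed

definition constant_numerator :: "nat \<Rightarrow> real \<Rightarrow> nat" where
  "constant_numerator P c = min (nat \<lfloor>c * real P\<rfloor>) (P - 1)"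

lemma constant_numerator:
  assumes P: "P > 0" and c: "0 \<le> c" "c \<le> 1"
  shows "constant_numerator P c < P"
    and "\<bar>real (constant_numerator P c) / real P - c\<bar> \<le> 1 / real P"
proof -
  let ?n = "constant_numerator P c"
  show "?n < P" using P by (simp add: constant_numerator_def)
  have "real ?n \<le> real (nat \<lfloor>c * real P\<rfloor>)" by (simp add: constant_numerator_def)
  also have "\<dots> \<le> c * real P" using c by simp
  finally have le: "real ?n \<le> c * real P" .
  have "c * real P \<le> real P" using c P by (simp add: mult_left_le_one_le)
  hence "c * real P - 1 \<le> real (P - 1)" using P by (simp add: of_nat_diff)
  moreover have "c * real P - 1 \<le> real (nat \<lfloor>c * real P\<rfloor>)" using c by simp
  ultimately have ge: "c * real P - 1 \<le> real ?n" by (simp add: constant_numerator_def min_def)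
  have "real ?n / real P - c = (real ?n - c * real P) / real P" using P by (simp add: field_simps)
  moreover have "\<bar>real ?n - c * real P\<bar> \<le> 1" using le ge by simp
  ultimately show "\<bar>real ?n / real P - c\<bar> \<le> 1 / real P"
    using P by (simp add: abs_divide divide_right_mono)
qed

(* The slope 2 * top_weight lam makes the interpolation coefficients integer multiples of
   top_weight lam; f is extended constantly beyond 1 because the grid reaches past 1. *)
definition approx_net :: "nat \<Rightarrow> (real \<Rightarrow> real) \<Rightarrow> nat \<Rightarrow> layer list" where
  "approx_net lam f L =
     (let Nc = constant_numerator (lam ^ (4 * L + 5)) \<bar>f 0\<bar>;
          c0 = (if f 0 \<ge> 0 then 1 else -1) * counter_value lam Nc (4 * L + 5);
          M = zigzag_coeff (\<lambda>t. f (min t 1)) c0 (2 * top_weight lam) (grid_step lam L)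
      in net_of_units 1 (approx_units lam L Nc (f 0 \<ge> 0) M))"

lemma approx_net_eq:
  obtains Nc pos M where "approx_net lam f L = net_of_units 1 (approx_units lam L Nc pos M)"
    and "\<forall>a. \<bar>M a\<bar> \<le> 4"
  using zigzag_coeff_bound by (auto simp: approx_net_def Let_def)

lemma approx_net_error:
  assumes lam: "lam \<ge> 2" and f: "f \<in> F11" and x: "x \<in> {0..1}"
  shows "\<bar>realize (approx_net lam f L) x - f x\<bar> \<le> 6 * grid_step lam L"
proof -
  define T where "T = 4 * L + 5"
  define P where "P = lam ^ T"
  define Nc where "Nc = constant_numerator P \<bar>f 0\<bar>"
  define c0 where "c0 = (if f 0 \<ge> 0 then 1 else -1) * counter_value lam Nc T"
  define F where "F = (\<lambda>t. f (min t 1))"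
  define \<sigma> where "\<sigma> = 2 * top_weight lam"
  define \<delta> where "\<delta> = grid_step lam L"
  have P: "P > 0" using lam by (simp add: P_def)
  have \<delta>: "\<delta> > 0" "1 \<le> real (2 ^ Suc L) * \<delta>"
    using grid_step_bounds[OF lam] by (simp_all add: \<delta>_def)
  have \<sigma>: "1 \<le> \<sigma>" "\<sigma> < 2" using top_weight_bounds[OF lam] by (auto simp: \<sigma>_def)
  have Nc: "Nc < P" "\<bar>real Nc / real P - \<bar>f 0\<bar>\<bar> \<le> 1 / real P"
    using constant_numerator[OF P abs_ge_zero F11_abs_at_0[OF f]] by (simp_all add: Nc_def)
  have "counter_value lam Nc T = real Nc / real P"
    using Nc(1) by (simp add: counter_value_small P_def)
  moreover have "1 / real P \<le> \<delta>" using inverse_power_le_grid_step[OF lam]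
      by (simp add: P_def T_def \<delta>_def)
  ultimately have c0: "\<bar>c0 - F 0\<bar> \<le> \<delta>" using Nc(2) by (auto simp: c0_def F_def abs_le_iff)
  have lip: "\<bar>F s - F t\<bar> \<le> \<bar>s - t\<bar>" if "0 \<le> s" "0 \<le> t" for s t
  proof -
    have "\<bar>F s - F t\<bar> \<le> \<bar>min s 1 - min t 1\<bar>" using F11_lipschitz[OF f] that by (simp add: F_def)
    also have "\<dots> \<le> \<bar>s - t\<bar>" by (auto simp: abs_le_iff min_def)
    finally show ?thesis .
  qed
  have "realize (approx_net lam f L) x = zigzag_relu_sum F c0 \<sigma> \<delta> (2 ^ Suc L) x"
    using realize_approx_net[OF lam, of x L Nc "f 0 \<ge> 0"] x
    by (simp add: approx_net_def Let_def zigzag_relu_sum_def Nc_def P_def T_def c0_def F_def \<sigma>_def \<delta>_def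
        ac_simps)
  moreover have "\<bar>zigzag_relu_sum F c0 \<sigma> \<delta> (2 ^ Suc L) x - F x\<bar> \<le> (2 * \<sigma> + 2) * \<delta>"
    by (rule zigzag_relu_sum_error[OF lip \<delta>(1) \<sigma>(1) c0]) (use x \<delta>(2) in auto)
  moreover have "(2 * \<sigma> + 2) * \<delta> \<le> 6 * \<delta>" using \<sigma> \<delta> by (intro mult_right_mono) auto
  ultimately show ?thesis using x by (simp add: F_def \<delta>_def)
qed

lemma approx_net_structure:
  assumes lam: "lam \<ge> 2"
  shows "relu_net (approx_net lam f L)" and "weights_in (quant_weights lam) (approx_net lam f L)"
    and "depth (approx_net lam f L) = 4 * L + 6" and "num_weights (approx_net lam f L) \<le> 244 * 2 ^ L"
proof -
  obtain Nc pos M where N: "approx_net lam f L = net_of_units 1 (approx_units lam L Nc pos M)"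
    and M: "\<forall>a. \<bar>M a\<bar> \<le> 4"
    by (rule approx_net_eq)
  show "relu_net (approx_net lam f L)"
    unfolding N by (rule relu_net_net_of_units[OF approx_units_not_Nil length_last_approx_units])
  show "weights_in (quant_weights lam) (approx_net lam f L)"
    unfolding N by (rule approx_net_weights_in[OF lam])
  show "depth (approx_net lam f L) = 4 * L + 6"
    by (simp add: N depth_def length_approx_units)
  show "num_weights (approx_net lam f L) \<le> 244 * 2 ^ L"
    unfolding N by (rule num_weights_approx_net[OF M])
qed

theorem theorem4:
  shows "\<exists>C>0. \<forall>lam::nat. lam \<ge> 2 \<longrightarrow>
    (\<forall>f\<in>F11. \<forall>\<epsilon>::real. 0 < \<epsilon> \<and> \<epsilon> < 1 \<longrightarrow>
      (\<exists>N. relu_net N \<and> weights_in (quant_weights lam) N \<and>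
           (\<forall>x\<in>{0..1}. \<bar>realize N x - f x\<bar> \<le> \<epsilon>) \<and>
           real (depth N) \<le> C * (1 + log 2 (1 / \<epsilon>)) \<and>
           real (num_weights N) \<le> C / \<epsilon> \<and>
           num_bits lam N \<le> C * log 2 (real lam) / \<epsilon>))"
proof (intro exI[of _ 3000] conjI allI impI ballI)
  fix lam :: nat and f and \<epsilon> :: real assume lam: "lam \<ge> 2" and f: "f \<in> F11" and \<epsilon>: "0 < \<epsilon> \<and> \<epsilon> < 1"
  obtain L where L: "6 / \<epsilon> \<le> real (2 ^ L)" "real (2 ^ L) < 12 / \<epsilon>" "real L \<le> log 2 (1 / \<epsilon>) + 4"
    using exists_dyadic_scale \<epsilon> by blast
  note net = approx_net_structure[OF lam, of f L]
  have "6 * grid_step lam L \<le> 6 / real (2 ^ L)" using grid_step_bounds(2)[OF lam, of L] by simp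
  also have "\<dots> \<le> \<epsilon>" using L(1) \<epsilon> by (simp add: field_simps)
  finally have "\<forall>x\<in>{0..1}. \<bar>realize (approx_net lam f L) x - f x\<bar> \<le> \<epsilon>"
    using approx_net_error[OF lam f] by (meson order_trans)
  moreover have "log 2 (1 / \<epsilon>) \<ge> 0" using \<epsilon> by simp
  hence "real (depth (approx_net lam f L)) \<le> 3000 * (1 + log 2 (1 / \<epsilon>))"
    using L(3) net(3) by simp
  moreover have nw: "real (num_weights (approx_net lam f L)) \<le> 3000 / \<epsilon>"
  proof -
    have "real (num_weights (approx_net lam f L)) \<le> 244 * real (2 ^ L)"
      using net(4) by (metis of_nat_le_iff of_nat_mult of_nat_numeral)
    also have "\<dots> \<le> 3000 / \<epsilon>" using L(2) \<epsilon> by (simp add: field_simps)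
    finally show ?thesis .
  qed
  moreover have "num_bits lam (approx_net lam f L) \<le> 3000 * log 2 (real lam) / \<epsilon>"
    using mult_right_mono[OF nw, of "log 2 (real lam)"] lam by (simp add: num_bits_def)
  ultimately show "\<exists>N. relu_net N \<and> weights_in (quant_weights lam) N \<and>
           (\<forall>x\<in>{0..1}. \<bar>realize N x - f x\<bar> \<le> \<epsilon>) \<and>
           real (depth N) \<le> 3000 * (1 + log 2 (1 / \<epsilon>)) \<and>
           real (num_weights N) \<le> 3000 / \<epsilon> \<and>
           num_bits lam N \<le> 3000 * log 2 (real lam) / \<epsilon>"
    using net(1,2) by blast
qed simp

end
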